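(* Let $m=2$ and suppose $n>2k+2$ where $0\le k\le n-1$. Let $\mathcal{C}$ be the class of all complete acyclic $k$-bounded binary CP-nets over $n$ variables, over $\mathcal{X}_{swap}$. (1) If $|F^1(x)\cap L|\le n-2-2k$ for every $x\in\mathcal{X}_{swap}$, then $\mathcal{C}$ is learnable with membership queries to a limited oracle. (2) If $|F^1(x)\cap L|\le\lfloor\frac{n-1}{2}\rfloor-k-1$ for every $x\in\mathcal{X}_{swap}$, then $\mathcal{C}$ is learnable with membership queries to a malicious oracle. In either case the worst-case number of queries is in $O(n^2\mathcal{U}_k+e_{N^*}n\log_2(n))$, which is in $O(n^22^k\log_2(n)k^{O(\log_2(k))}+e_{N^*}n\log_2(n))$, where $e_{N^*}$ is the number of edges of the target $N^*$.
   Context: Variables $V=\{v_1,\dots,v_n\}$ with binary domains. An outcome assigns a value to every variable. A complete CP-net gives each $v_i$ a parent set $Pa(v_i)\subseteq V\setminus\{v_i\}$ and, for each assignment $\gamma$ to $Pa(v_i)$, a strict order on $D_{v_i}$; parents are non-dummy. Acyclic: the parent graph (edges $(v_j,v_i)$, $v_j\in Pa(v_i)$) is acyclic; $k$-bounded: all $|Pa(v_i)|\le k$. Improving flip: changing only $v_i$ to the value preferred under the order for context $o[Pa(v_i)]$; $o'\succ o$ iff a nonempty sequence of improving flips leads from $o$ to $o'$. A swap is an ordered pair $x=(x.1,x.2)$ of outcomes differing in exactly one variable $V(x)$; $\mathcal{X}_{swap}$ contains exactly one ordering of each such pair (fixed arbitrarily); the target concept is $c^*(x)=1$ iff $x.1\succ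 x.2$ under the target $N^*$. For $x\in\mathcal{X}_{swap}$, $F^1(x)$ is the set of swaps $x'\in\mathcal{X}_{swap}$ with $V(x')=V(x)$ whose outcomes differ from those of $x$ in exactly one variable other than $V(x)$. A set $L\subseteq\mathcal{X}_{swap}$ is fixed in advance by an adversary, and is unknown to the learner. A limited oracle answers a membership query for $x\notin L$ with $c^*(x)$ and for $x\in L$ with "I don't know"; a malicious oracle answers $c^*(x)$ for $x\notin L$ and $1-c^*(x)$ for $x\in L$; both are persistent (same answer on repeated queries). A class is learnable with membership queries to a limited (malicious) oracle if some algorithm exactly identifies every target in the class using a number of queries polynomial in $n$, the size of the target (its total number of CPT statements), and $|L|$. $\mathcal{U}_k$ is the smallest size of a set $S\subseteq\{0,1\}^{n-1}$ whose projection onto every set of $k$ coordinates contains all $2^k$ vectors. *)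

theory Defs
  imports Complex_Main
begin

text \<open>Variables are v_0,...,v_(n-1) (indices 0..<n); binary domains are bool.
  An outcome over n variables is a bool list of length n.\<close>

definition outcome :: "nat \<Rightarrow> bool list \<Rightarrow> bool" where
  "outcome n o1 \<longleftrightarrow> length o1 = n"

definition is_swap :: "nat \<Rightarrow> bool list \<times> bool list \<Rightarrow> bool" where
  "is_swap n x \<longleftrightarrow> outcome n (fst x) \<and> outcome n (snd x) \<and>
     card {i. i < n \<and> fst x ! i \<noteq> snd x ! i} = 1"

definition swapvar :: "bool list \<times> bool list \<Rightarrow> nat" where
  "swapvar x = (THE i. i < length (fst x) \<and> fst x ! i \<noteq> snd x ! i)"

definition is_Xswap :: "nat \<Rightarrow> (bool list \<times> bool list) set \<Rightarrow> bool" where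
  "is_Xswap n X \<longleftrightarrow> X \<subseteq> {x. is_swap n x} \<and>
     (\<forall>a b. is_swap n (a, b) \<longrightarrow> ((a, b) \<in> X \<longleftrightarrow> (b, a) \<notin> X))"

definition F1 :: "nat \<Rightarrow> (bool list \<times> bool list) set \<Rightarrow> bool list \<times> bool list
                   \<Rightarrow> (bool list \<times> bool list) set" where
  "F1 n X x = {x' \<in> X. swapvar x' = swapvar x \<and>
      card {j. j < n \<and> j \<noteq> swapvar x \<and> fst x' ! j \<noteq> fst x ! j} = 1}"

text \<open>A binary CP-net: parent sets Pa i, and for each variable i the preferred value
  pref i o of v_i in the context given by outcome o (the strict order on the binary
  domain {True,False} is determined by its top element).\<close>
record cpnet =
  Pa :: "nat \<Rightarrow> nat set"
  pref :: "nat \<Rightarrow> bool list \<Rightarrow> bool"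

definition parent_graph :: "nat \<Rightarrow> cpnet \<Rightarrow> (nat \<times> nat) set" where
  "parent_graph n N = {(j, i). i < n \<and> j \<in> Pa N i}"

definition is_cpnet :: "nat \<Rightarrow> nat \<Rightarrow> cpnet \<Rightarrow> bool" where
  "is_cpnet n k N \<longleftrightarrow>
     (\<forall>i<n. Pa N i \<subseteq> {0..<n} - {i} \<and> card (Pa N i) \<le> k) \<and>
     (\<forall>i<n. \<forall>o1 o2. outcome n o1 \<and> outcome n o2 \<and> (\<forall>j\<in>Pa N i. o1 ! j = o2 ! j)
              \<longrightarrow> pref N i o1 = pref N i o2) \<and>
     (\<forall>i<n. \<forall>j\<in>Pa N i. \<exists>o1. outcome n o1 \<and>
              pref N i o1 \<noteq> pref N i (o1[j := \<not> o1 ! j])) \<and>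
     acyclic (parent_graph n N)"

definition flips :: "nat \<Rightarrow> cpnet \<Rightarrow> (bool list \<times> bool list) set" where
  "flips n N = {(o1, o1[i := pref N i o1]) | o1 i. outcome n o1 \<and> i < n \<and> o1 ! i \<noteq> pref N i o1}"

definition better :: "nat \<Rightarrow> cpnet \<Rightarrow> bool list \<Rightarrow> bool list \<Rightarrow> bool" where
  "better n N o' o1 \<longleftrightarrow> (o1, o') \<in> (flips n N)\<^sup>+"

definition concept :: "nat \<Rightarrow> cpnet \<Rightarrow> bool list \<times> bool list \<Rightarrow> bool" where
  "concept n N x \<longleftrightarrow> better n N (fst x) (snd x)"

text \<open>Size = total number of CPT statements; number of edges of the parent graph.\<close>
definition net_size :: "nat \<Rightarrow> cpnet \<Rightarrow> nat" where
  "net_size n N = (\<Sum>i<n. 2 ^ card (Pa N i))"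

definition net_edges :: "nat \<Rightarrow> cpnet \<Rightarrow> nat" where
  "net_edges n N = (\<Sum>i<n. card (Pa N i))"

section \<open>Oracles (persistent: deterministic functions of the query)\<close>

definition limited_oracle :: "nat \<Rightarrow> cpnet \<Rightarrow> (bool list \<times> bool list) set
     \<Rightarrow> bool list \<times> bool list \<Rightarrow> bool option" where
  "limited_oracle n N L x = (if x \<in> L then None else Some (concept n N x))"

definition malicious_oracle :: "nat \<Rightarrow> cpnet \<Rightarrow> (bool list \<times> bool list) set
     \<Rightarrow> bool list \<times> bool list \<Rightarrow> bool option" where
  "malicious_oracle n N L x = Some (if x \<in> L then \<not> concept n N x else concept n N x)"

datatype ('q, 'a, 'r) qtree = Leaf 'r | Ask 'q "'a \<Rightarrow> ('q, 'a, 'r) qtree"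

inductive runs :: "('q \<Rightarrow> 'a) \<Rightarrow> ('q, 'a, 'r) qtree \<Rightarrow> 'r \<Rightarrow> 'q list \<Rightarrow> bool"
  for orc where
  "runs orc (Leaf r) r []"
| "runs orc (f (orc q)) r qs \<Longrightarrow> runs orc (Ask q f) r (q # qs)"

type_synonym learner =
  "(bool list \<times> bool list, bool option, bool list \<times> bool list \<Rightarrow> bool) qtree"

definition k_universal :: "nat \<Rightarrow> nat \<Rightarrow> bool list set \<Rightarrow> bool" where
  "k_universal m k S \<longleftrightarrow> S \<subseteq> {s. length s = m} \<and>
     (\<forall>I. I \<subseteq> {0..<m} \<and> card I = k \<longrightarrow>
        (\<forall>f :: nat \<Rightarrow> bool. \<exists>s\<in>S. \<forall>i\<in>I. s ! i = f i))"

definition U :: "nat \<Rightarrow> nat \<Rightarrow> nat" where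
  "U n k = (LEAST c. \<exists>S. k_universal (n - 1) k S \<and> card S = c)"

text \<open>The algorithm A n k X (knowing n, k and the fixed orientation X of X_swap)
  exactly identifies every target of the class, whatever the unknown L satisfying the
  hypothesis (bound b n k on |F^1(x) \<inter> L|), asks only queries from X, asks a number
  of queries polynomial in n, size and |L| (for each fixed k), and the number of queries
  satisfies the two stated O-bounds (constants uniform in n, k, L, target).\<close>
definition learns_with_bounds ::
  "(nat \<Rightarrow> cpnet \<Rightarrow> (bool list \<times> bool list) set \<Rightarrow> bool list \<times> bool list \<Rightarrow> bool option)
   \<Rightarrow> (nat \<Rightarrow> nat \<Rightarrow> nat) \<Rightarrow> (nat \<Rightarrow> nat \<Rightarrow> (bool list \<times> bool list) set \<Rightarrow> learner) \<Rightarrow> bool" where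
  "learns_with_bounds oracle b A \<longleftrightarrow>
    (\<forall>n k X L N h qs.
       2 * k + 2 < n \<and> is_Xswap n X \<and> L \<subseteq> X \<and> is_cpnet n k N \<and>
       (\<forall>x\<in>X. card (F1 n X x \<inter> L) \<le> b n k) \<and>
       runs (oracle n N L) (A n k X) h qs
       \<longrightarrow> (\<forall>x\<in>X. h x = concept n N x) \<and> set qs \<subseteq> X) \<and>
    (\<forall>k. \<exists>c d::nat. \<forall>n X L N h qs.
       2 * k + 2 < n \<and> is_Xswap n X \<and> L \<subseteq> X \<and> is_cpnet n k N \<and>
       (\<forall>x\<in>X. card (F1 n X x \<inter> L) \<le> b n k) \<and>
       runs (oracle n N L) (A n k X) h qs
       \<longrightarrow> length qs \<le> c * (n + net_size n N + card L) ^ d) \<and>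
    (\<exists>C D :: real. \<forall>n k X L N h qs.
       2 * k + 2 < n \<and> is_Xswap n X \<and> L \<subseteq> X \<and> is_cpnet n k N \<and>
       (\<forall>x\<in>X. card (F1 n X x \<inter> L) \<le> b n k) \<and>
       runs (oracle n N L) (A n k X) h qs
       \<longrightarrow> real (length qs) \<le> C * (real n ^ 2 * real (U n k)
                  + real (net_edges n N) * real n * log 2 (real n)) \<and>
           real (length qs) \<le> C * (real n ^ 2 * 2 ^ k * log 2 (real n)
                  * real (max k 2) powr (D * log 2 (real (max k 2)))
                  + real (net_edges n N) * real n * log 2 (real n)))"

end

(* Since the parent graph is acyclic, improving flips cannot cycle, so x.1 is better than x.2
   for a swap x exactly when x.1 carries the preferred value of V(x) in its context.
   For each variable v_i and each context a, the preferred value of v_i at a is estimated by a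
   majority vote over the n - 1 swaps on v_i whose context differs from a in one other variable.
   Flipping a non-parent leaves the preferred value unchanged, at most k of the neighbours are
   parents, and at most |F^1(x) \<inter> L| answers are missing or wrong; the hypotheses on L make the
   correct votes a strict majority.  Voting on the contexts of a minimal k-universal set gives
   the preferred value of v_i on every assignment of its parents.  The parents themselves are
   found one at a time: two contexts that agree on the parents found so far but get different
   preferred values differ in a further parent, located by a binary search costing
   O(log n) votes.  Finally, a counting argument bounds a smallest k-universal set by
   2^k * 2(k + 1) * ceil(log2 n). *)

theory Submission
  imports Defs "HOL-Library.FuncSet"
begin

section \<open>CP-nets, improving flips and swaps\<close>

context
  fixes n k N
  assumes cpnet: "is_cpnet n k N"
begin

lemma cpnet_Pa_subset: "i < n \<Longrightarrow> Pa N i \<subseteq> {0..<n} - {i}"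
  using cpnet unfolding is_cpnet_def by blast

lemma cpnet_Pa_card: "i < n \<Longrightarrow> card (Pa N i) \<le> k"
  using cpnet unfolding is_cpnet_def by blast

lemma cpnet_Pa_finite: "i < n \<Longrightarrow> finite (Pa N i)"
  using cpnet_Pa_subset finite_subset by blast

lemma cpnet_pref_cong:
  assumes "i < n" "length a = n" "length b = n" "\<forall>j\<in>Pa N i. a ! j = b ! j"
  shows "pref N i a = pref N i b"
  using cpnet assms unfolding is_cpnet_def outcome_def by blast

lemma cpnet_pref_update:
  assumes "i < n" "length a = n" "j \<notin> Pa N i"
  shows "pref N i (a[j := c]) = pref N i a"
proof -
  have "\<forall>j'\<in>Pa N i. a[j := c] ! j' = a ! j'"
    using assms(3) by (metis nth_list_update_neq)
  then show ?thesis using assms(1,2) by (intro cpnet_pref_cong) auto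
qed

lemma cpnet_pref_update_self:
  assumes "i < n" "length a = n"
  shows "pref N i (a[i := c]) = pref N i a"
  using assms cpnet_Pa_subset[of i] by (intro cpnet_pref_update) auto

lemma cpnet_parent_relevant:
  assumes "i < n" "j \<in> Pa N i"
  obtains a where "length a = n" "pref N i a \<noteq> pref N i (a[j := \<not> a ! j])"
  using cpnet assms unfolding is_cpnet_def outcome_def by blast

lemma cpnet_net_edges_le: "net_edges n N \<le> n * k"
proof -
  have "net_edges n N \<le> (\<Sum>i<n. k)"
    unfolding net_edges_def by (rule sum_mono) (use cpnet_Pa_card in auto)
  then show ?thesis by simp
qed

end

inductive flip_path :: "nat \<Rightarrow> cpnet \<Rightarrow> bool list \<Rightarrow> nat list \<Rightarrow> bool list \<Rightarrow> bool"
  for n N where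
  Nil: "flip_path n N a [] a"
| Cons: "length a = n \<Longrightarrow> v < n \<Longrightarrow> a ! v \<noteq> pref N v a \<Longrightarrow>
    flip_path n N (a[v := pref N v a]) vs b \<Longrightarrow> flip_path n N a (v # vs) b"

lemma flips_trancl_imp_flip_path:
  assumes "(a, b) \<in> (flips n N)\<^sup>+"
  obtains vs where "vs \<noteq> []" "flip_path n N a vs b"
  using assms
proof (induction arbitrary: thesis rule: converse_trancl_induct)
  case (base a)
  then show ?case
    unfolding flips_def outcome_def by (auto intro: flip_path.intros)
next
  case (step a a')
  obtain vs where "flip_path n N a' vs b" using step.IH by blast
  with step.hyps(1) show ?case
    unfolding flips_def outcome_def by (auto intro: step.prems flip_path.Cons)
qed

lemma flip_path_vars: "flip_path n N a vs b \<Longrightarrow> set vs \<subseteq> {0..<n}"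
  by (induction rule: flip_path.induct) auto

lemma flip_path_nth_unflipped: "flip_path n N a vs b \<Longrightarrow> v \<notin> set vs \<Longrightarrow> b ! v = a ! v"
  by (induction rule: flip_path.induct) auto

text \<open>If no parent of \<open>v\<close> flips, the preferred value of \<open>v\<close> stays fixed; so \<open>v\<close> can only
  flip towards it, and once there it never flips again.\<close>

lemma flip_path_flipped_var:
  assumes cpnet: "is_cpnet n k N" and v: "v < n"
  shows "flip_path n N a vs b \<Longrightarrow> \<forall>u\<in>set vs. u \<notin> Pa N v \<Longrightarrow> v \<in> set vs \<Longrightarrow>
    a ! v \<noteq> pref N v a \<and> b ! v = pref N v a"
proof (induction rule: flip_path.induct)
  case (Nil a)
  then show ?case by simp
next
  case (Cons a w vs b)
  let ?a' = "a[w := pref N w a]"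
  have pref_eq: "pref N v ?a' = pref N v a"
    using Cons.prems(1) cpnet_pref_update[OF cpnet v Cons.hyps(1)] by simp
  show ?case
  proof (cases "v \<in> set vs")
    case True
    with Cons.IH Cons.prems(1) have IH: "?a' ! v \<noteq> pref N v a" "b ! v = pref N v a"
      using pref_eq by auto
    then have "w \<noteq> v" using Cons.hyps(1,2) pref_eq by auto
    then show ?thesis using IH by simp
  next
    case False
    then have "w = v" using Cons.prems(2) by simp
    then show ?thesis
      using Cons.hyps flip_path_nth_unflipped[OF Cons.hyps(4) False] by simp
  qed
qed

lemma flips_trancl_irrefl:
  assumes cpnet: "is_cpnet n k N"
  shows "(a, a) \<notin> (flips n N)\<^sup>+"
proof
  assume "(a, a) \<in> (flips n N)\<^sup>+"
  then obtain vs where "vs \<noteq> []" and path: "flip_path n N a vs a"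
    by (rule flips_trancl_imp_flip_path)
  have "finite (parent_graph n N)"
    by (rule finite_subset[of _ "{0..<n} \<times> {0..<n}"])
      (use cpnet_Pa_subset[OF cpnet] in \<open>auto simp: parent_graph_def\<close>)
  then have "wf ((parent_graph n N)\<^sup>+)"
    using cpnet unfolding is_cpnet_def by (metis finite_acyclic_wf wf_trancl)
  then obtain v where v: "v \<in> set vs"
    and minimal: "\<And>u. (u, v) \<in> (parent_graph n N)\<^sup>+ \<Longrightarrow> u \<notin> set vs"
    using wfE_min[of _ "hd vs" "set vs"] \<open>vs \<noteq> []\<close> by (metis list.set_sel(1))
  have "v < n" using flip_path_vars[OF path] v by auto
  then have "\<forall>u\<in>set vs. u \<notin> Pa N v"
    using minimal unfolding parent_graph_def by blast
  then show False
    using flip_path_flipped_var[OF cpnet \<open>v < n\<close> path _ v] by blast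
qed

lemma swapvar_eqI:
  assumes "length a = length b" "i < length a" "a ! i \<noteq> b ! i"
    "\<forall>j<length a. j \<noteq> i \<longrightarrow> a ! j = b ! j"
  shows "swapvar (a, b) = i"
  unfolding swapvar_def by (rule the_equality) (use assms in auto)

lemma Xswap_memD:
  assumes "is_Xswap n X" "x \<in> X"
  shows "swapvar x < n" "length (fst x) = n"
    "snd x = (fst x)[swapvar x := \<not> fst x ! swapvar x]"
proof -
  have len: "length (fst x) = n" "length (snd x) = n"
    and card: "card {i. i < n \<and> fst x ! i \<noteq> snd x ! i} = 1"
    using assms unfolding is_Xswap_def is_swap_def outcome_def by auto
  from card obtain i where diff: "{i. i < n \<and> fst x ! i \<noteq> snd x ! i} = {i}"
    by (rule card_1_singletonE)
  then have i: "i < n" "fst x ! i \<noteq> snd x ! i"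
    and others: "\<forall>j<n. j \<noteq> i \<longrightarrow> fst x ! j = snd x ! j"
    by auto
  have var: "swapvar x = i"
    using swapvar_eqI[of "fst x" "snd x" i] len i others by (cases x) simp
  show "swapvar x < n" "length (fst x) = n" using var i len by auto
  show "snd x = (fst x)[swapvar x := \<not> fst x ! swapvar x]"
  proof (rule nth_equalityI)
    fix j assume "j < length (snd x)"
    then show "snd x ! j = (fst x)[swapvar x := \<not> fst x ! swapvar x] ! j"
      using var others i len by (cases "j = i") auto
  qed (use len in simp)
qed

lemma flipsI: "length a = n \<Longrightarrow> i < n \<Longrightarrow> a ! i \<noteq> pref N i a \<Longrightarrow>
  (a, a[i := pref N i a]) \<in> flips n N"
  unfolding flips_def outcome_def by blast

lemma concept_flip_iff:
  assumes cpnet: "is_cpnet n k N" and len: "length a = n" and i: "i < n"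
  shows "concept n N (a, a[i := \<not> a ! i]) \<longleftrightarrow> a ! i = pref N i a"
proof
  let ?b = "a[i := \<not> a ! i]"
  assume better: "concept n N (a, ?b)"
  show "a ! i = pref N i a"
  proof (rule ccontr)
    assume ne: "a ! i \<noteq> pref N i a"
    then have "(\<not> a ! i) = pref N i a" by blast
    then have "(a, ?b) \<in> flips n N" using flipsI[OF len i ne] by simp
    moreover have "(?b, a) \<in> (flips n N)\<^sup>+"
      using better unfolding concept_def better_def by simp
    ultimately have "(a, a) \<in> (flips n N)\<^sup>+" by (rule trancl_into_trancl2)
    then show False using flips_trancl_irrefl[OF cpnet] by blast
  qed
next
  let ?b = "a[i := \<not> a ! i]"
  have pref_b: "pref N i ?b = pref N i a" using cpnet_pref_update_self[OF cpnet i len] .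
  assume pref_a: "a ! i = pref N i a"
  then have "?b ! i \<noteq> pref N i ?b" using pref_b i len by simp
  then have "(?b, ?b[i := pref N i ?b]) \<in> flips n N" using len i by (intro flipsI) simp_all
  moreover have "?b[i := pref N i ?b] = a"
    by (simp only: pref_b list_update_overwrite pref_a[symmetric] list_update_id)
  ultimately show "concept n N (a, ?b)" unfolding concept_def better_def by auto
qed

lemma concept_Xswap_iff:
  assumes "is_cpnet n k N" "is_Xswap n X" "x \<in> X"
  shows "concept n N x \<longleftrightarrow> fst x ! swapvar x = pref N (swapvar x) (fst x)"
proof -
  have "x = (fst x, (fst x)[swapvar x := \<not> fst x ! swapvar x])"
    using Xswap_memD(3)[OF assms(2,3)] by (cases x) simp
  then show ?thesis
    using concept_flip_iff[OF assms(1) Xswap_memD(2,1)[OF assms(2,3)]] by simp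
qed

definition oriented_swap :: "(bool list \<times> bool list) set \<Rightarrow> nat \<Rightarrow> bool list \<Rightarrow> bool list \<times> bool list" where
  "oriented_swap X i a = (if (a[i := True], a[i := False]) \<in> X then (a[i := True], a[i := False])
     else (a[i := False], a[i := True]))"

lemma oriented_swap_cases:
  obtains c where "oriented_swap X i a = (a[i := c], a[i := \<not> c])"
proof (cases "(a[i := True], a[i := False]) \<in> X")
  case True
  then show ?thesis using that[of True] unfolding oriented_swap_def by simp
next
  case False
  then show ?thesis using that[of False] unfolding oriented_swap_def by simp
qed

lemma fst_oriented_swap_nth: "j \<noteq> i \<Longrightarrow> fst (oriented_swap X i a) ! j = a ! j"
  by (rule oriented_swap_cases[of X i a]) auto

lemma oriented_swap_in:
  assumes X: "is_Xswap n X" and "length a = n" "i < n"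
  shows "oriented_swap X i a \<in> X"
proof -
  have "{j. j < n \<and> a[i := True] ! j \<noteq> a[i := False] ! j} = {i}"
    using assms(2,3) by (auto simp: nth_list_update)
  then have "is_swap n (a[i := True], a[i := False])"
    unfolding is_swap_def outcome_def using assms(2) by simp
  then show ?thesis using X unfolding is_Xswap_def oriented_swap_def by auto
qed

lemma swapvar_oriented_swap:
  assumes "length a = n" "i < n"
  shows "swapvar (oriented_swap X i a) = i"
proof -
  obtain c where c: "oriented_swap X i a = (a[i := c], a[i := \<not> c])"
    by (rule oriented_swap_cases)
  show ?thesis unfolding c by (rule swapvar_eqI) (use assms in \<open>auto simp: nth_list_update\<close>)
qed

lemma concept_oriented_swap_iff:
  assumes cpnet: "is_cpnet n k N" and X: "is_Xswap n X" and "length a = n" "i < n"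
  shows "concept n N (oriented_swap X i a) \<longleftrightarrow> fst (oriented_swap X i a) ! i = pref N i a"
proof -
  have "pref N i (fst (oriented_swap X i a)) = pref N i a"
    by (rule oriented_swap_cases[of X i a]) (use cpnet_pref_update_self[OF cpnet] assms in auto)
  then show ?thesis
    using concept_Xswap_iff[OF cpnet X oriented_swap_in[OF X assms(3,4)]]
      swapvar_oriented_swap[OF assms(3,4)] by simp
qed

primrec exec :: "('q \<Rightarrow> 'a) \<Rightarrow> ('q, 'a, 'r) qtree \<Rightarrow> 'r \<times> 'q list" where
  "exec orc (Leaf r) = (r, [])"
| "exec orc (Ask q f) = (fst (exec orc (f (orc q))), q # snd (exec orc (f (orc q))))"

lemma runs_imp_exec: "runs orc t r qs \<Longrightarrow> exec orc t = (r, qs)"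
  by (induction rule: runs.induct) auto

primrec bind_tree :: "('q, 'a, 'r) qtree \<Rightarrow> ('r \<Rightarrow> ('q, 'a, 's) qtree) \<Rightarrow> ('q, 'a, 's) qtree" where
  "bind_tree (Leaf r) g = g r"
| "bind_tree (Ask q f) g = Ask q (\<lambda>a. bind_tree (f a) g)"

lemma exec_bind_tree:
  "exec orc (bind_tree t g) =
     (fst (exec orc (g (fst (exec orc t)))), snd (exec orc t) @ snd (exec orc (g (fst (exec orc t)))))"
  by (induction t) auto

fun seq_trees :: "('q, 'a, 'r) qtree list \<Rightarrow> ('q, 'a, 'r list) qtree" where
  "seq_trees [] = Leaf []"
| "seq_trees (t # ts) = bind_tree t (\<lambda>r. bind_tree (seq_trees ts) (\<lambda>rs. Leaf (r # rs)))"

lemma exec_seq_trees: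
  "exec orc (seq_trees ts) = (map (fst \<circ> exec orc) ts, concat (map (snd \<circ> exec orc) ts))"
  by (induction ts) (auto simp: exec_bind_tree)

section \<open>Majority votes over neighbouring swaps\<close>

definition other_vars :: "nat \<Rightarrow> nat \<Rightarrow> nat list" where
  "other_vars n i = filter (\<lambda>j. j \<noteq> i) [0..<n]"

definition neighbour_swap ::
  "(bool list \<times> bool list) set \<Rightarrow> nat \<Rightarrow> bool list \<Rightarrow> nat \<Rightarrow> bool list \<times> bool list" where
  "neighbour_swap X i a j = oriented_swap X i (a[j := \<not> a ! j])"

text \<open>An answer to a swap \<open>q\<close> on \<open>v\<^sub>i\<close> read as the preferred value of \<open>v\<^sub>i\<close> it asserts
  (see \<open>concept_oriented_swap_iff\<close>); \<open>None\<close> is no vote.\<close>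

definition read_answer :: "nat \<Rightarrow> bool list \<times> bool list \<Rightarrow> bool option \<Rightarrow> bool option" where
  "read_answer i q = map_option (\<lambda>b. b = (fst q ! i))"

definition neighbour_vote :: "(bool list \<times> bool list \<Rightarrow> bool option) \<Rightarrow> (bool list \<times> bool list) set
    \<Rightarrow> nat \<Rightarrow> bool list \<Rightarrow> nat \<Rightarrow> bool option" where
  "neighbour_vote orc X i a j = read_answer i (neighbour_swap X i a j) (orc (neighbour_swap X i a j))"

definition majority_vote :: "(bool list \<times> bool list) set \<Rightarrow> nat \<Rightarrow> nat \<Rightarrow> bool list
    \<Rightarrow> (bool list \<times> bool list, bool option, bool) qtree" where
  "majority_vote X n i a =
    (let qs = map (neighbour_swap X i a) (other_vars n i) in
     bind_tree (seq_trees (map (\<lambda>q. Ask q Leaf) qs))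
       (\<lambda>answers. let votes = map2 (read_answer i) qs answers in
          Leaf (count_list votes (Some False) < count_list votes (Some True))))"

definition votes_for :: "(bool list \<times> bool list \<Rightarrow> bool option) \<Rightarrow> (bool list \<times> bool list) set
    \<Rightarrow> nat \<Rightarrow> nat \<Rightarrow> bool list \<Rightarrow> bool \<Rightarrow> nat set" where
  "votes_for orc X n i a v = {j \<in> {0..<n} - {i}. neighbour_vote orc X i a j = Some v}"

definition votes_reliable :: "(bool list \<times> bool list \<Rightarrow> bool option) \<Rightarrow> (bool list \<times> bool list) set
    \<Rightarrow> nat \<Rightarrow> cpnet \<Rightarrow> bool" where
  "votes_reliable orc X n N \<longleftrightarrow> (\<forall>i<n. \<forall>a. length a = n \<longrightarrow>
     card (votes_for orc X n i a (\<not> pref N i a)) < card (votes_for orc X n i a (pref N i a)))"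

lemma set_other_vars: "set (other_vars n i) = {0..<n} - {i}"
  unfolding other_vars_def by auto

lemma distinct_other_vars: "distinct (other_vars n i)"
  unfolding other_vars_def by simp

lemma length_other_vars: "i < n \<Longrightarrow> length (other_vars n i) = n - 1"
  using distinct_card[OF distinct_other_vars, of n i] by (simp add: set_other_vars)

lemma count_list_map_distinct:
  "distinct xs \<Longrightarrow> count_list (map f xs) y = card {x \<in> set xs. f x = y}"
proof (induction xs)
  case (Cons x xs)
  have "{z \<in> set (x # xs). f z = y} =
    (if f x = y then insert x {z \<in> set xs. f z = y} else {z \<in> set xs. f z = y})"
    by auto
  then show ?case using Cons by auto
qed simp

lemma exec_majority_vote:
  assumes "votes_reliable orc X n N" "i < n" "length a = n"
  shows "exec orc (majority_vote X n i a) = (pref N i a, map (neighbour_swap X i a) (other_vars n i))"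
proof -
  let ?qs = "map (neighbour_swap X i a) (other_vars n i)"
  let ?count = "\<lambda>v. card (votes_for orc X n i a v)"
  have "map2 (read_answer i) ?qs (map orc ?qs) = map (neighbour_vote orc X i a) (other_vars n i)"
    by (simp add: neighbour_vote_def zip_map_map map_zip_map2 zip_same_conv_map comp_def)
  then have "count_list (map2 (read_answer i) ?qs (map orc ?qs)) (Some v) = ?count v" for v
    by (simp add: count_list_map_distinct[OF distinct_other_vars] set_other_vars votes_for_def)
  moreover have "?count (\<not> pref N i a) < ?count (pref N i a)"
    using assms unfolding votes_reliable_def by blast
  then have "(?count False < ?count True) = pref N i a"
    by (cases "pref N i a") auto
  ultimately show ?thesis
    unfolding majority_vote_def Let_def exec_bind_tree by (simp add: exec_seq_trees comp_def)
qed

lemma neighbour_swap_in: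
  "is_Xswap n X \<Longrightarrow> length a = n \<Longrightarrow> i < n \<Longrightarrow> neighbour_swap X i a j \<in> X"
  unfolding neighbour_swap_def by (rule oriented_swap_in) auto

lemma majority_vote_queries:
  assumes "is_Xswap n X" "i < n" "length a = n"
  shows "set (map (neighbour_swap X i a) (other_vars n i)) \<subseteq> X"
    "length (map (neighbour_swap X i a) (other_vars n i)) = n - 1"
  using neighbour_swap_in[OF assms(1,3,2)] length_other_vars[OF assms(2)] by auto

definition faulty_neighbours ::
  "(bool list \<times> bool list) set \<Rightarrow> (bool list \<times> bool list) set \<Rightarrow> nat \<Rightarrow> nat \<Rightarrow> bool list \<Rightarrow> nat set" where
  "faulty_neighbours X L n i a = {j \<in> {0..<n} - {i}. neighbour_swap X i a j \<in> L}"

lemma finite_Xswap: "is_Xswap n X \<Longrightarrow> finite X"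
proof -
  assume "is_Xswap n X"
  then have "X \<subseteq> {xs. length xs = n} \<times> {xs. length xs = n}"
    unfolding is_Xswap_def is_swap_def outcome_def by auto
  moreover have "finite {xs :: bool list. length xs = n}"
    using finite_lists_length_eq[OF finite_UNIV, of n] by simp
  ultimately show ?thesis using finite_subset by blast
qed

lemma card_Diff2_ge:
  assumes "finite B" "finite C"
  shows "card A - card B - card C \<le> card (A - B - C)"
proof -
  have "card A - card B - card C \<le> card (A - B) - card C"
    using diff_card_le_card_Diff[OF assms(1), of A] by (rule diff_le_mono)
  also have "\<dots> \<le> card (A - B - C)"
    using diff_card_le_card_Diff[OF assms(2)] .
  finally show ?thesis .
qed

context
  fixes n :: nat and X :: "(bool list \<times> bool list) set" and i :: nat and a :: "bool list"
  assumes X: "is_Xswap n X" and i: "i < n" and len: "length a = n"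
begin

lemma neighbour_swap_in_F1:
  assumes j: "j \<in> {0..<n} - {i}"
  shows "neighbour_swap X i a j \<in> F1 n X (oriented_swap X i a)"
proof -
  have var: "swapvar (neighbour_swap X i a j) = i" "swapvar (oriented_swap X i a) = i"
    unfolding neighbour_swap_def using swapvar_oriented_swap i len by simp_all
  have "fst (neighbour_swap X i a j) ! j' \<noteq> fst (oriented_swap X i a) ! j' \<longleftrightarrow> j' = j"
    if "j' \<noteq> i" for j'
  proof -
    have "fst (neighbour_swap X i a j) ! j' = a[j := \<not> a ! j] ! j'"
      unfolding neighbour_swap_def using that by (rule fst_oriented_swap_nth)
    moreover have "fst (oriented_swap X i a) ! j' = a ! j'"
      using that by (rule fst_oriented_swap_nth)
    ultimately show ?thesis using j len by (cases "j' = j") simp_all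
  qed
  then have "{j'. j' < n \<and> j' \<noteq> swapvar (oriented_swap X i a) \<and>
      fst (neighbour_swap X i a j) ! j' \<noteq> fst (oriented_swap X i a) ! j'} = {j}"
    using var j by auto
  then show ?thesis unfolding F1_def using neighbour_swap_in[OF X len i] var by simp
qed

lemma inj_on_neighbour_swap: "inj_on (neighbour_swap X i a) ({0..<n} - {i})"
proof (rule inj_onI)
  fix j j' assume j: "j \<in> {0..<n} - {i}" and j': "j' \<in> {0..<n} - {i}"
    and eq: "neighbour_swap X i a j = neighbour_swap X i a j'"
  have "fst (neighbour_swap X i a j) ! j = (\<not> a ! j)"
    unfolding neighbour_swap_def using fst_oriented_swap_nth j len by simp
  moreover have "fst (neighbour_swap X i a j') ! j = a ! j" if "j \<noteq> j'"
    unfolding neighbour_swap_def using fst_oriented_swap_nth j that by simp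
  ultimately show "j = j'" using eq by auto
qed

lemma card_faulty_neighbours_le:
  assumes "L \<subseteq> X"
  shows "card (faulty_neighbours X L n i a) \<le> card (F1 n X (oriented_swap X i a) \<inter> L)"
proof -
  have "card (faulty_neighbours X L n i a) = card (neighbour_swap X i a ` faulty_neighbours X L n i a)"
    by (rule card_image[symmetric], rule inj_on_subset[OF inj_on_neighbour_swap])
      (auto simp: faulty_neighbours_def)
  also have "\<dots> \<le> card (F1 n X (oriented_swap X i a) \<inter> L)"
    using neighbour_swap_in_F1 finite_Xswap[OF X]
    by (intro card_mono) (auto simp: F1_def faulty_neighbours_def)
  finally show ?thesis .
qed

end

text \<open>Both oracles answer truthfully outside \<open>L\<close>, which is all the following needs.\<close>

context
  fixes n k N X L orc
  assumes cpnet: "is_cpnet n k N" and X: "is_Xswap n X"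
    and truthful: "\<forall>x\<in>X - L. orc x = Some (concept n N x)"
begin

lemma neighbour_vote_truthful:
  assumes i: "i < n" and len: "length a = n"
    and j: "j \<in> {0..<n} - {i} - Pa N i - faulty_neighbours X L n i a"
  shows "neighbour_vote orc X i a j = Some (pref N i a)"
proof -
  let ?q = "neighbour_swap X i a j"
  have "?q \<notin> L" "j \<notin> Pa N i" using j unfolding faulty_neighbours_def by auto
  then have answer: "orc ?q = Some (concept n N ?q)"
    using truthful neighbour_swap_in[OF X len i] by blast
  have "pref N i (a[j := \<not> a ! j]) = pref N i a"
    using cpnet_pref_update[OF cpnet i len \<open>j \<notin> Pa N i\<close>] .
  then have "concept n N ?q \<longleftrightarrow> fst ?q ! i = pref N i a"
    using concept_oriented_swap_iff[OF cpnet X, of "a[j := \<not> a ! j]" i] len i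
    unfolding neighbour_swap_def by simp
  then show ?thesis
    unfolding neighbour_vote_def read_answer_def answer by (cases "pref N i a") auto
qed

lemma wrong_votes_subset:
  assumes "i < n" "length a = n"
  shows "votes_for orc X n i a (\<not> pref N i a) \<subseteq> Pa N i \<union> faulty_neighbours X L n i a"
proof
  fix j assume "j \<in> votes_for orc X n i a (\<not> pref N i a)"
  then show "j \<in> Pa N i \<union> faulty_neighbours X L n i a"
    using neighbour_vote_truthful[OF assms, of j] unfolding votes_for_def by auto
qed

lemma card_correct_votes_ge:
  assumes "i < n" "length a = n"
  shows "n - 1 - card (Pa N i) - card (faulty_neighbours X L n i a)
    \<le> card (votes_for orc X n i a (pref N i a))"
proof -
  let ?A = "{0..<n} - {i}" and ?F = "faulty_neighbours X L n i a"
  have "card ?A - card (Pa N i) - card ?F \<le> card (?A - Pa N i - ?F)"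
    by (rule card_Diff2_ge) (auto simp: faulty_neighbours_def cpnet_Pa_finite[OF cpnet assms(1)])
  also have "\<dots> \<le> card (votes_for orc X n i a (pref N i a))"
    using neighbour_vote_truthful[OF assms] unfolding votes_for_def by (intro card_mono) auto
  finally show ?thesis using assms(1) by simp
qed

end

lemma votes_reliable_limited:
  assumes n: "2 * k + 2 < n" and cpnet: "is_cpnet n k N" and X: "is_Xswap n X" and "L \<subseteq> X"
    and bound: "\<forall>x\<in>X. card (F1 n X x \<inter> L) \<le> n - 2 - 2 * k"
  shows "votes_reliable (limited_oracle n N L) X n N"
  unfolding votes_reliable_def
proof (intro allI impI)
  fix i and a :: "bool list" assume i: "i < n" and len: "length a = n"
  let ?orc = "limited_oracle n N L" and ?F = "faulty_neighbours X L n i a"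
  have truthful: "\<forall>x\<in>X - L. ?orc x = Some (concept n N x)"
    unfolding limited_oracle_def by simp
  have "votes_for ?orc X n i a (\<not> pref N i a) \<inter> ?F = {}"
    unfolding votes_for_def faulty_neighbours_def neighbour_vote_def limited_oracle_def read_answer_def
    by auto
  then have "votes_for ?orc X n i a (\<not> pref N i a) \<subseteq> Pa N i"
    using wrong_votes_subset[OF cpnet X truthful i len] by blast
  then have "card (votes_for ?orc X n i a (\<not> pref N i a)) \<le> card (Pa N i)"
    by (rule card_mono[OF cpnet_Pa_finite[OF cpnet i]])
  moreover have "card ?F \<le> n - 2 - 2 * k"
    using card_faulty_neighbours_le[OF X i len \<open>L \<subseteq> X\<close>] bound oriented_swap_in[OF X len i]
    by fastforce
  ultimately show "card (votes_for ?orc X n i a (\<not> pref N i a)) < card (votes_for ?orc X n i a (pref N i a))"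
    using card_correct_votes_ge[OF cpnet X truthful i len] cpnet_Pa_card[OF cpnet i] n
    by linarith
qed

lemma votes_reliable_malicious:
  assumes n: "2 * k + 2 < n" and cpnet: "is_cpnet n k N" and X: "is_Xswap n X" and "L \<subseteq> X"
    and bound: "\<forall>x\<in>X. card (F1 n X x \<inter> L) \<le> (n - 1) div 2 - k - 1"
  shows "votes_reliable (malicious_oracle n N L) X n N"
  unfolding votes_reliable_def
proof (intro allI impI)
  fix i and a :: "bool list" assume i: "i < n" and len: "length a = n"
  let ?orc = "malicious_oracle n N L" and ?F = "faulty_neighbours X L n i a"
  have truthful: "\<forall>x\<in>X - L. ?orc x = Some (concept n N x)"
    unfolding malicious_oracle_def by simp
  have "card (votes_for ?orc X n i a (\<not> pref N i a)) \<le> card (Pa N i \<union> ?F)"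
    using wrong_votes_subset[OF cpnet X truthful i len] cpnet_Pa_finite[OF cpnet i]
    by (intro card_mono) (auto simp: faulty_neighbours_def)
  also have "\<dots> \<le> card (Pa N i) + card ?F" by (rule card_Un_le)
  finally have wrong: "card (votes_for ?orc X n i a (\<not> pref N i a)) \<le> card (Pa N i) + card ?F" .
  have "card ?F \<le> (n - 1) div 2 - k - 1"
    using card_faulty_neighbours_le[OF X i len \<open>L \<subseteq> X\<close>] bound oriented_swap_in[OF X len i]
    by fastforce
  then have "card (Pa N i) + card ?F < n - 1 - card (Pa N i) - card ?F"
    using cpnet_Pa_card[OF cpnet i] n by (simp add: less_diff_conv; presburger)
  then show "card (votes_for ?orc X n i a (\<not> pref N i a)) < card (votes_for ?orc X n i a (pref N i a))"
    using wrong card_correct_votes_ge[OF cpnet X truthful i len] by linarith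
qed

section \<open>Learning the preference table of one variable\<close>

text \<open>A vector of length \<open>n - 1\<close> assigns the variables other than \<open>v\<^sub>i\<close>; the value of \<open>v\<^sub>i\<close>
  itself is irrelevant, as \<open>v\<^sub>i\<close> is not its own parent.\<close>

definition ctx_outcome :: "nat \<Rightarrow> bool list \<Rightarrow> bool list" where
  "ctx_outcome i s = take i s @ False # drop i s"

lemma length_ctx_outcome: "length s = n - 1 \<Longrightarrow> i < n \<Longrightarrow> length (ctx_outcome i s) = n"
  unfolding ctx_outcome_def by simp

lemma ctx_outcome_nth:
  assumes "length s = n - 1" "i < n" "j < n" "j \<noteq> i"
  shows "ctx_outcome i s ! j = s ! (if j < i then j else j - 1)"
proof (cases "j < i")
  case False
  then obtain d where d: "j = Suc (i + d)" using assms(4) by (metis less_iff_Suc_add linorder_neqE_nat)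
  then show ?thesis using assms unfolding ctx_outcome_def by (simp add: nth_append)
qed (use assms in \<open>simp add: ctx_outcome_def nth_append\<close>)

lemma k_universal_le:
  assumes univ: "k_universal m k S" and "k \<le> m" and I: "I \<subseteq> {0..<m}" "card I \<le> k"
  obtains s where "s \<in> S" "\<forall>i\<in>I. s ! i = f i"
proof -
  have "finite I" using I(1) finite_subset by blast
  have "k - card I \<le> card ({0..<m} - I)"
    using card_Diff_subset[OF \<open>finite I\<close> I(1)] assms(2) by simp
  then obtain C where C: "C \<subseteq> {0..<m} - I" "card C = k - card I" "finite C"
    by (rule obtain_subset_with_card_n)
  have "card (I \<union> C) = k"
    using card_Un_disjoint[OF \<open>finite I\<close> C(3)] C(1,2) I(2) by auto
  moreover have "I \<union> C \<subseteq> {0..<m}" using I(1) C(1) by blast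
  ultimately obtain s where "s \<in> S" "\<forall>i\<in>I \<union> C. s ! i = f i"
    using univ unfolding k_universal_def by blast
  then show ?thesis using that by blast
qed

lemma k_universal_ctx_outcome:
  assumes univ: "k_universal (n - 1) k S" and i: "i < n" and "k \<le> n - 1"
    and B: "B \<subseteq> {0..<n} - {i}" "card B \<le> k"
  obtains s where "s \<in> S" "\<forall>j\<in>B. ctx_outcome i s ! j = g j"
proof -
  define down where "down j = (if j < i then j else j - 1)" for j :: nat
  define up where "up j = (if j < i then j else j + 1)" for j :: nat
  have up_down: "up (down j) = j" if "j \<in> B" for j
    using B(1) that unfolding up_def down_def by auto
  then have "inj_on down B" by (rule inj_on_inverseI)
  then have card: "card (down ` B) \<le> k" using B(2) by (simp add: card_image)
  have sub: "down ` B \<subseteq> {0..<n - 1}" using B(1) i unfolding down_def by auto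
  obtain s where s: "s \<in> S" "\<forall>j'\<in>down ` B. s ! j' = g (up j')"
    by (rule k_universal_le[OF univ \<open>k \<le> n - 1\<close> sub card, where f = "\<lambda>j'. g (up j')"])
  have "length s = n - 1" using univ s(1) unfolding k_universal_def by auto
  have "ctx_outcome i s ! j = g j" if "j \<in> B" for j
  proof -
    have "j < n" "j \<noteq> i" using B(1) that by auto
    then have "ctx_outcome i s ! j = s ! down j"
      using ctx_outcome_nth[OF \<open>length s = n - 1\<close> i] unfolding down_def by blast
    also have "\<dots> = g j" using s(2) that up_down[OF that] by force
    finally show ?thesis .
  qed
  then show ?thesis using that s(1) by blast
qed

definition mix :: "bool list \<Rightarrow> bool list \<Rightarrow> nat list \<Rightarrow> bool list" where
  "mix u w D = map (\<lambda>j. if j \<in> set D then w ! j else u ! j) [0..<length u]"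

lemma length_mix [simp]: "length (mix u w D) = length u"
  unfolding mix_def by simp

lemma mix_nth: "j < length u \<Longrightarrow> mix u w D ! j = (if j \<in> set D then w ! j else u ! j)"
  unfolding mix_def by simp

lemma mix_take_diff:
  assumes "distinct D" "set D = {j. j < length u \<and> u ! j \<noteq> w ! j}"
  shows "set (take h D) = {j. j < length u \<and> u ! j \<noteq> mix u w (take h D) ! j}"
    "set (drop h D) = {j. j < length u \<and> mix u w (take h D) ! j \<noteq> w ! j}"
proof -
  let ?T = "set (take h D)" and ?R = "set (drop h D)" and ?m = "mix u w (take h D)"
  have "?T \<union> ?R = set D" by (metis set_append append_take_drop_id)
  moreover have "?T \<inter> ?R = {}"
    by (rule set_take_disj_set_drop_if_distinct[OF assms(1) order_refl])
  ultimately have T: "j \<in> ?T \<Longrightarrow> j \<in> set D \<and> j \<notin> ?R" and R: "j \<in> ?R \<longleftrightarrow> j \<in> set D \<and> j \<notin> ?T"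
    for j by blast+
  have D: "j \<in> set D \<longleftrightarrow> j < length u \<and> u ! j \<noteq> w ! j" for j using assms(2) by blast
  have "j \<in> ?T \<longleftrightarrow> j < length u \<and> u ! j \<noteq> ?m ! j" for j
  proof (cases "j \<in> ?T")
    case True
    then show ?thesis using T[OF True] D[of j] mix_nth[of j u w "take h D"] by simp
  next
    case False
    then show ?thesis using mix_nth[of j u w "take h D"] by auto
  qed
  moreover have "j \<in> ?R \<longleftrightarrow> j < length u \<and> ?m ! j \<noteq> w ! j" for j
  proof (cases "j \<in> ?T")
    case True
    then show ?thesis using T[OF True] D[of j] mix_nth[of j u w "take h D"] by simp
  next
    case False
    then show ?thesis using R[of j] D[of j] mix_nth[of j u w "take h D"] by auto
  qed
  ultimately show "?T = {j. j < length u \<and> u ! j \<noteq> ?m ! j}" "?R = {j. j < length u \<and> ?m ! j \<noteq> w ! j}"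
    by blast+
qed

text \<open>Binary search among the positions \<open>D\<close> where \<open>u\<close> and \<open>w\<close> differ, whose preferred values
  of \<open>v\<^sub>i\<close> differ: the preferred value also changes across one half of \<open>D\<close>, which therefore
  contains a parent.  The known value \<open>lu\<close> at \<open>u\<close> is passed on so that \<open>u\<close> is not voted on
  again.\<close>

primrec search_parent :: "(bool list \<times> bool list) set \<Rightarrow> nat \<Rightarrow> nat \<Rightarrow> nat \<Rightarrow> bool list \<Rightarrow> bool
    \<Rightarrow> bool list \<Rightarrow> nat list \<Rightarrow> (bool list \<times> bool list, bool option, nat) qtree" where
  "search_parent X n i 0 u lu w D = Leaf (hd D)"
| "search_parent X n i (Suc f) u lu w D = (if length D \<le> 1 then Leaf (hd D) else
     (let D1 = take (length D div 2) D; m = mix u w D1 in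
      bind_tree (majority_vote X n i m)
        (\<lambda>lm. if lm \<noteq> lu then search_parent X n i f u lu m D1
              else search_parent X n i f m lm w (drop (length D div 2) D))))"

context
  fixes n k N X and orc :: "bool list \<times> bool list \<Rightarrow> bool option"
  assumes cpnet: "is_cpnet n k N" and X: "is_Xswap n X" and reliable: "votes_reliable orc X n N"
begin

lemma hd_diff_positions_parent:
  assumes "i < n" "length u = n" "length w = n" "set D = {j. j < n \<and> u ! j \<noteq> w ! j}"
    "pref N i u \<noteq> pref N i w" "length D \<le> 1"
  shows "hd D \<in> set D \<inter> Pa N i"
proof -
  obtain j where "j \<in> Pa N i" "u ! j \<noteq> w ! j"
    using cpnet_pref_cong[OF cpnet assms(1-3)] assms(5) by blast
  moreover have "j < n" using cpnet_Pa_subset[OF cpnet assms(1)] \<open>j \<in> Pa N i\<close> by auto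
  ultimately have "j \<in> set D" using assms(4) by blast
  then have "D = [j]" using assms(6) by (cases D) auto
  then show ?thesis using \<open>j \<in> Pa N i\<close> by simp
qed

lemma search_parent_correct:
  assumes "i < n" "length u = n" "length w = n" "distinct D" "set D = {j. j < n \<and> u ! j \<noteq> w ! j}"
    "lu = pref N i u" "pref N i u \<noteq> pref N i w" "length D \<le> 2 ^ f"
  shows "fst (exec orc (search_parent X n i f u lu w D)) \<in> set D \<inter> Pa N i \<and>
    length (snd (exec orc (search_parent X n i f u lu w D))) \<le> f * (n - 1) \<and>
    set (snd (exec orc (search_parent X n i f u lu w D))) \<subseteq> X"
  using assms(2-)
proof (induction f arbitrary: u lu w D)
  case 0
  then show ?case using hd_diff_positions_parent[OF assms(1)] by simp
next
  case (Suc f)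
  show ?case
  proof (cases "length D \<le> 1")
    case True
    then show ?thesis using hd_diff_positions_parent[OF assms(1)] Suc.prems by simp
  next
    case False
    define D1 where "D1 = take (length D div 2) D"
    define D2 where "D2 = drop (length D div 2) D"
    define m where "m = mix u w D1"
    define right where "right = (pref N i m = pref N i u)"
    define u' where "u' = (if right then m else u)"
    define w' where "w' = (if right then w else m)"
    define D' where "D' = (if right then D2 else D1)"
    have len_m: "length m = n" unfolding m_def using Suc.prems(1) by simp
    have halves: "set D1 = {j. j < n \<and> u ! j \<noteq> m ! j}" "set D2 = {j. j < n \<and> m ! j \<noteq> w ! j}"
      using mix_take_diff[OF Suc.prems(3), of u w] Suc.prems(1,4)
      unfolding D1_def D2_def m_def by simp_all
    have vote: "exec orc (majority_vote X n i m) =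
        (pref N i m, map (neighbour_swap X i m) (other_vars n i))"
      by (rule exec_majority_vote[OF reliable assms(1) len_m])
    have tree: "search_parent X n i (Suc f) u lu w D = bind_tree (majority_vote X n i m)
        (\<lambda>lm. if lm \<noteq> lu then search_parent X n i f u lu m D1 else search_parent X n i f m lm w D2)"
      using False unfolding D1_def D2_def m_def by (simp add: Let_def)
    have exec: "exec orc (search_parent X n i (Suc f) u lu w D) =
        (fst (exec orc (search_parent X n i f u' (pref N i u') w' D')),
         map (neighbour_swap X i m) (other_vars n i) @ snd (exec orc (search_parent X n i f u' (pref N i u') w' D')))"
      unfolding tree exec_bind_tree vote using Suc.prems(5)
      by (cases right) (simp_all add: u'_def w'_def D'_def right_def)
    have "fst (exec orc (search_parent X n i f u' (pref N i u') w' D')) \<in> set D' \<inter> Pa N i \<and>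
      length (snd (exec orc (search_parent X n i f u' (pref N i u') w' D'))) \<le> f * (n - 1) \<and>
      set (snd (exec orc (search_parent X n i f u' (pref N i u') w' D'))) \<subseteq> X"
    proof (rule Suc.IH)
      show "length u' = n" "length w' = n"
        unfolding u'_def w'_def using len_m Suc.prems(1,2) by simp_all
      show "distinct D'" unfolding D'_def D1_def D2_def using Suc.prems(3) by simp
      show "set D' = {j. j < n \<and> u' ! j \<noteq> w' ! j}"
        unfolding D'_def u'_def w'_def using halves by simp
      show "pref N i u' \<noteq> pref N i w'"
        unfolding u'_def w'_def right_def using Suc.prems(6) by auto
      show "length D' \<le> 2 ^ f"
        unfolding D'_def D1_def D2_def using Suc.prems(7) by (simp; linarith)
    qed simp
    moreover have "set D' \<subseteq> set D"
      unfolding D'_def D1_def D2_def by (auto dest: in_set_takeD in_set_dropD)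
    ultimately show ?thesis
      unfolding exec using majority_vote_queries[OF X assms(1) len_m] by auto
  qed
qed

end

definition conflict :: "bool list set \<Rightarrow> nat \<Rightarrow> (bool list \<Rightarrow> bool) \<Rightarrow> nat set \<Rightarrow> bool" where
  "conflict S i lab P \<longleftrightarrow> (\<exists>s\<in>S. \<exists>s'\<in>S.
     (\<forall>j\<in>P. ctx_outcome i s ! j = ctx_outcome i s' ! j) \<and> lab s \<noteq> lab s')"

definition conflicting_pair :: "bool list set \<Rightarrow> nat \<Rightarrow> (bool list \<Rightarrow> bool) \<Rightarrow> nat set
    \<Rightarrow> bool list \<times> bool list" where
  "conflicting_pair S i lab P = (SOME (s, s'). s \<in> S \<and> s' \<in> S \<and>
     (\<forall>j\<in>P. ctx_outcome i s ! j = ctx_outcome i s' ! j) \<and> lab s \<noteq> lab s')"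

definition diff_positions :: "nat \<Rightarrow> bool list \<Rightarrow> bool list \<Rightarrow> nat list" where
  "diff_positions n u w = filter (\<lambda>j. u ! j \<noteq> w ! j) [0..<n]"

text \<open>Each round adds a new parent, so fuel \<open>n\<close> suffices.\<close>

primrec find_parents :: "(bool list \<times> bool list) set \<Rightarrow> nat \<Rightarrow> nat \<Rightarrow> bool list set
    \<Rightarrow> (bool list \<Rightarrow> bool) \<Rightarrow> nat \<Rightarrow> nat \<Rightarrow> nat set \<Rightarrow> (bool list \<times> bool list, bool option, nat set) qtree"
  where
  "find_parents X n i S lab T 0 P = Leaf P"
| "find_parents X n i S lab T (Suc f) P = (if conflict S i lab P then
     (case conflicting_pair S i lab P of (s, s') \<Rightarrow>
        bind_tree (search_parent X n i T (ctx_outcome i s) (lab s) (ctx_outcome i s')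
            (diff_positions n (ctx_outcome i s) (ctx_outcome i s')))
          (\<lambda>j. find_parents X n i S lab T f (insert j P)))
   else Leaf P)"

lemma conflicting_pair:
  assumes "conflict S i lab P" "conflicting_pair S i lab P = (s, s')"
  shows "s \<in> S" "s' \<in> S" "\<forall>j\<in>P. ctx_outcome i s ! j = ctx_outcome i s' ! j" "lab s \<noteq> lab s'"
proof -
  have "\<exists>p. case p of (s, s') \<Rightarrow> s \<in> S \<and> s' \<in> S \<and>
      (\<forall>j\<in>P. ctx_outcome i s ! j = ctx_outcome i s' ! j) \<and> lab s \<noteq> lab s'"
    using assms(1) unfolding conflict_def by auto
  from someI_ex[OF this] assms(2)
  show "s \<in> S" "s' \<in> S" "\<forall>j\<in>P. ctx_outcome i s ! j = ctx_outcome i s' ! j" "lab s \<noteq> lab s'"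
    unfolding conflicting_pair_def by auto
qed

context
  fixes n k N X and orc :: "bool list \<times> bool list \<Rightarrow> bool option"
  assumes cpnet: "is_cpnet n k N" and X: "is_Xswap n X" and reliable: "votes_reliable orc X n N"
begin

context
  fixes i S lab T
  assumes i: "i < n" and S: "\<forall>s\<in>S. length s = n - 1"
    and lab: "\<forall>s\<in>S. lab s = pref N i (ctx_outcome i s)" and T: "n \<le> 2 ^ T"
begin

lemma search_on_conflict:
  assumes "s \<in> S" "s' \<in> S" "\<forall>j\<in>P. ctx_outcome i s ! j = ctx_outcome i s' ! j" "lab s \<noteq> lab s'"
    and "exec orc (search_parent X n i T (ctx_outcome i s) (lab s) (ctx_outcome i s')
      (diff_positions n (ctx_outcome i s) (ctx_outcome i s'))) = (j, qs)"
  shows "j \<in> Pa N i - P" "length qs \<le> T * (n - 1)" "set qs \<subseteq> X"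
proof -
  let ?u = "ctx_outcome i s" and ?w = "ctx_outcome i s'"
  have len: "length ?u = n" "length ?w = n"
    using assms(1,2) S length_ctx_outcome i by auto
  have "length (diff_positions n ?u ?w) \<le> 2 ^ T"
    unfolding diff_positions_def using length_filter_le[of _ "[0..<n]"] T by (metis le_trans length_upt minus_nat.diff_0)
  then have "j \<in> set (diff_positions n ?u ?w) \<inter> Pa N i \<and> length qs \<le> T * (n - 1) \<and> set qs \<subseteq> X"
    using search_parent_correct[OF cpnet X reliable i len, of "diff_positions n ?u ?w" "lab s" T]
      assms lab unfolding diff_positions_def by auto
  then show "j \<in> Pa N i - P" "length qs \<le> T * (n - 1)" "set qs \<subseteq> X"
    using assms(3) unfolding diff_positions_def by auto
qed

lemma find_parents_correct:
  assumes "P \<subseteq> Pa N i" "exec orc (find_parents X n i S lab T f P) = (Q, qs)"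
  shows "P \<subseteq> Q \<and> Q \<subseteq> Pa N i \<and> (card (Pa N i) - card P < f \<longrightarrow> \<not> conflict S i lab Q) \<and>
    length qs \<le> (card (Pa N i) - card P) * (T * (n - 1)) \<and> set qs \<subseteq> X"
  using assms
proof (induction f arbitrary: P Q qs)
  case 0
  then show ?case by simp
next
  case (Suc f)
  show ?case
  proof (cases "conflict S i lab P")
    case False
    then show ?thesis using Suc.prems by simp
  next
    case True
    obtain s s' where pair: "conflicting_pair S i lab P = (s, s')" by fastforce
    obtain j qs1 where search: "exec orc (search_parent X n i T (ctx_outcome i s) (lab s)
        (ctx_outcome i s') (diff_positions n (ctx_outcome i s) (ctx_outcome i s'))) = (j, qs1)"
      by fastforce
    define qs2 where "qs2 = snd (exec orc (find_parents X n i S lab T f (insert j P)))"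
    have "fst (exec orc (find_parents X n i S lab T f (insert j P))) = Q" "qs = qs1 @ qs2"
      using Suc.prems(2) True pair search unfolding qs2_def by (simp_all add: exec_bind_tree)
    then have rest: "exec orc (find_parents X n i S lab T f (insert j P)) = (Q, qs2)"
      and qs: "qs = qs1 @ qs2"
      unfolding qs2_def by (simp_all add: prod_eq_iff)
    note found = search_on_conflict[OF conflicting_pair[OF True pair] search]
    have "finite (Pa N i)" by (rule cpnet_Pa_finite[OF cpnet i])
    then have "finite P" using Suc.prems(1) finite_subset by blast
    then have card: "card (Pa N i) - card P = Suc (card (Pa N i) - card (insert j P))"
      using found(1) Suc.prems(1) card_mono[OF \<open>finite (Pa N i)\<close>, of "insert j P"]
      by (simp add: card_insert_disjoint)
    have "insert j P \<subseteq> Pa N i" using found(1) Suc.prems(1) by blast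
    from Suc.IH[OF this rest] show ?thesis
      using found(2,3) card qs by (simp add: algebra_simps)
  qed
qed

end

end

context
  fixes n k N
  assumes cpnet: "is_cpnet n k N"
begin

lemma find_parents_complete:
  assumes univ: "k_universal (n - 1) k S" and "i < n" "k \<le> n - 1"
    and lab: "\<forall>s\<in>S. lab s = pref N i (ctx_outcome i s)"
    and "P \<subseteq> Pa N i" "\<not> conflict S i lab P"
  shows "P = Pa N i"
proof (rule ccontr)
  assume "P \<noteq> Pa N i"
  then obtain j where j: "j \<in> Pa N i" "j \<notin> P" using assms(5) by blast
  obtain a where len: "length a = n" and relevant: "pref N i a \<noteq> pref N i (a[j := \<not> a ! j])"
    using cpnet_parent_relevant[OF cpnet \<open>i < n\<close> j(1)] .
  have Pa: "Pa N i \<subseteq> {0..<n} - {i}" "card (Pa N i) \<le> k"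
    using cpnet_Pa_subset[OF cpnet \<open>i < n\<close>] cpnet_Pa_card[OF cpnet \<open>i < n\<close>] .
  obtain s where s: "s \<in> S" "\<forall>j'\<in>Pa N i. ctx_outcome i s ! j' = a ! j'"
    by (rule k_universal_ctx_outcome[OF univ \<open>i < n\<close> \<open>k \<le> n - 1\<close> Pa])
  obtain s' where s': "s' \<in> S" "\<forall>j'\<in>Pa N i. ctx_outcome i s' ! j' = a[j := \<not> a ! j] ! j'"
    by (rule k_universal_ctx_outcome[OF univ \<open>i < n\<close> \<open>k \<le> n - 1\<close> Pa])
  have len_s: "length (ctx_outcome i s) = n" "length (ctx_outcome i s') = n"
    using s(1) s'(1) univ length_ctx_outcome \<open>i < n\<close> unfolding k_universal_def by auto
  have "pref N i (ctx_outcome i s) = pref N i a"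
    using cpnet_pref_cong[OF cpnet \<open>i < n\<close> len_s(1) len] s(2) by blast
  moreover have "pref N i (ctx_outcome i s') = pref N i (a[j := \<not> a ! j])"
    using cpnet_pref_cong[OF cpnet \<open>i < n\<close> len_s(2)] len s'(2) by simp
  ultimately have "lab s \<noteq> lab s'" using lab s(1) s'(1) relevant by simp
  moreover have "ctx_outcome i s ! j' = ctx_outcome i s' ! j'" if "j' \<in> P" for j'
  proof -
    have "j' \<in> Pa N i" "j' \<noteq> j" using that j assms(5) by auto
    then show ?thesis using s(2) s'(2) by simp
  qed
  ultimately have "conflict S i lab P" using s(1) s'(1) unfolding conflict_def by blast
  with assms(6) show False ..
qed

lemma label_at_matching_context:
  assumes univ: "k_universal (n - 1) k S" and "i < n" "k \<le> n - 1"
    and lab: "\<forall>s\<in>S. lab s = pref N i (ctx_outcome i s)" and "length a = n"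
  shows "lab (SOME s. s \<in> S \<and> (\<forall>j\<in>Pa N i. ctx_outcome i s ! j = a ! j)) = pref N i a"
proof -
  define s where "s = (SOME s. s \<in> S \<and> (\<forall>j\<in>Pa N i. ctx_outcome i s ! j = a ! j))"
  obtain s0 where "s0 \<in> S" "\<forall>j\<in>Pa N i. ctx_outcome i s0 ! j = a ! j"
    by (rule k_universal_ctx_outcome[OF univ \<open>i < n\<close> \<open>k \<le> n - 1\<close>
        cpnet_Pa_subset[OF cpnet \<open>i < n\<close>] cpnet_Pa_card[OF cpnet \<open>i < n\<close>]])
  then have "\<exists>s. s \<in> S \<and> (\<forall>j\<in>Pa N i. ctx_outcome i s ! j = a ! j)" by blast
  then have s: "s \<in> S \<and> (\<forall>j\<in>Pa N i. ctx_outcome i s ! j = a ! j)"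
    unfolding s_def by (rule someI_ex)
  have "length (ctx_outcome i s) = n"
    using s univ length_ctx_outcome \<open>i < n\<close> unfolding k_universal_def by auto
  then have "pref N i (ctx_outcome i s) = pref N i a"
    using cpnet_pref_cong[OF cpnet \<open>i < n\<close> _ \<open>length a = n\<close>] s by blast
  then show ?thesis using lab s unfolding s_def[symmetric] by simp
qed

end

definition learn_cpt :: "(bool list \<times> bool list) set \<Rightarrow> nat \<Rightarrow> nat \<Rightarrow> bool list list \<Rightarrow> nat
    \<Rightarrow> (bool list \<times> bool list, bool option, bool list \<Rightarrow> bool) qtree" where
  "learn_cpt X n i Sl T =
     bind_tree (seq_trees (map (\<lambda>s. majority_vote X n i (ctx_outcome i s)) Sl))
       (\<lambda>labels. let lab = (\<lambda>s. the (map_of (zip Sl labels) s)) in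
          bind_tree (find_parents X n i (set Sl) lab T n {})
            (\<lambda>P. Leaf (\<lambda>a. lab (SOME s. s \<in> set Sl \<and> (\<forall>j\<in>P. ctx_outcome i s ! j = a ! j)))))"

context
  fixes n k N X and orc :: "bool list \<times> bool list \<Rightarrow> bool option"
  assumes cpnet: "is_cpnet n k N" and X: "is_Xswap n X" and reliable: "votes_reliable orc X n N"
begin

lemma exec_label_contexts:
  assumes "i < n" "\<forall>s\<in>set Sl. length s = n - 1"
  shows "exec orc (seq_trees (map (\<lambda>s. majority_vote X n i (ctx_outcome i s)) Sl)) =
    (map (\<lambda>s. pref N i (ctx_outcome i s)) Sl,
     concat (map (\<lambda>s. map (neighbour_swap X i (ctx_outcome i s)) (other_vars n i)) Sl))"
proof -
  have "exec orc (majority_vote X n i (ctx_outcome i s)) =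
      (pref N i (ctx_outcome i s), map (neighbour_swap X i (ctx_outcome i s)) (other_vars n i))"
    if "s \<in> set Sl" for s
    using exec_majority_vote[OF reliable \<open>i < n\<close>] length_ctx_outcome[OF _ \<open>i < n\<close>] assms(2) that
    by simp
  then show ?thesis by (simp add: exec_seq_trees comp_def cong: map_cong)
qed

lemma learn_cpt_correct:
  assumes univ: "k_universal (n - 1) k (set Sl)" and i: "i < n" and T: "n \<le> 2 ^ T" and "k < n"
    and exec: "exec orc (learn_cpt X n i Sl T) = (h, qs)"
  shows "(\<forall>a. length a = n \<longrightarrow> h a = pref N i a) \<and>
    length qs \<le> length Sl * (n - 1) + card (Pa N i) * (T * (n - 1)) \<and> set qs \<subseteq> X"
proof -
  define lab where "lab = (\<lambda>s. the (map_of (zip Sl (map (\<lambda>s. pref N i (ctx_outcome i s)) Sl)) s))"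
  define qs1 where "qs1 = concat (map (\<lambda>s. map (neighbour_swap X i (ctx_outcome i s)) (other_vars n i)) Sl)"
  have len_S: "\<forall>s\<in>set Sl. length s = n - 1" using univ unfolding k_universal_def by auto
  have lab: "\<forall>s\<in>set Sl. lab s = pref N i (ctx_outcome i s)"
    unfolding lab_def by (simp add: map_of_zip_map)
  obtain P qs2 where fp: "exec orc (find_parents X n i (set Sl) lab T n {}) = (P, qs2)" by fastforce
  have h: "h = (\<lambda>a. lab (SOME s. s \<in> set Sl \<and> (\<forall>j\<in>P. ctx_outcome i s ! j = a ! j)))"
    and qs: "qs = qs1 @ qs2"
    using exec fp unfolding learn_cpt_def exec_bind_tree exec_label_contexts[OF i len_S] Let_def
    by (simp_all add: lab_def qs1_def)
  have "P \<subseteq> Pa N i" "card (Pa N i) < n \<longrightarrow> \<not> conflict (set Sl) i lab P"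
    and qs2: "length qs2 \<le> card (Pa N i) * (T * (n - 1))" "set qs2 \<subseteq> X"
    using find_parents_correct[OF cpnet X reliable i len_S lab T _ fp] by simp_all
  then have P: "P = Pa N i"
    using find_parents_complete[OF cpnet univ i _ lab] cpnet_Pa_card[OF cpnet i] \<open>k < n\<close> by simp
  have "h a = pref N i a" if "length a = n" for a
    using label_at_matching_context[OF cpnet univ i _ lab that] \<open>k < n\<close> unfolding h P by simp
  moreover have "length qs1 = length Sl * (n - 1)"
    unfolding qs1_def by (simp add: length_concat comp_def length_other_vars[OF i] sum_list_triv)
  moreover have "set qs1 \<subseteq> X"
    using majority_vote_queries(1)[OF X i] length_ctx_outcome[OF _ i] len_S
    unfolding qs1_def by auto
  ultimately show ?thesis using qs qs2 by simp
qed

end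

lemma k_universal_all_lists: "k_universal m k {s. length s = m}"
  unfolding k_universal_def
proof (intro conjI allI impI)
  fix I and f :: "nat \<Rightarrow> bool" assume "I \<subseteq> {0..<m} \<and> card I = k"
  then show "\<exists>s\<in>{s. length s = m}. \<forall>i\<in>I. s ! i = f i"
    by (intro bexI[of _ "map f [0..<m]"]) auto
qed simp

lemma finite_k_universal: "k_universal m k S \<Longrightarrow> finite S"
  unfolding k_universal_def
  using finite_lists_length_eq[OF finite_UNIV, of m] finite_subset by fastforce

lemma U_attained: obtains S where "k_universal (n - 1) k S" "card S = U n k"
proof -
  have "\<exists>c S. k_universal (n - 1) k S \<and> card S = c"
    using k_universal_all_lists by blast
  then have "\<exists>S. k_universal (n - 1) k S \<and> card S = U n k"
    unfolding U_def by (rule LeastI_ex)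
  then show ?thesis using that by blast
qed

lemma U_le_card: "k_universal (n - 1) k S \<Longrightarrow> U n k \<le> card S"
  unfolding U_def by (rule Least_le) blast

definition min_universal_list :: "nat \<Rightarrow> nat \<Rightarrow> bool list list" where
  "min_universal_list n k =
    (SOME Sl. distinct Sl \<and> k_universal (n - 1) k (set Sl) \<and> length Sl = U n k)"

lemma min_universal_list:
  "k_universal (n - 1) k (set (min_universal_list n k))" "length (min_universal_list n k) = U n k"
proof -
  obtain S where S: "k_universal (n - 1) k S" "card S = U n k" by (rule U_attained)
  obtain Sl where "set Sl = S" "distinct Sl"
    using finite_distinct_list[OF finite_k_universal[OF S(1)]] by blast
  then have "\<exists>Sl. distinct Sl \<and> k_universal (n - 1) k (set Sl) \<and> length Sl = U n k"
    using S distinct_card by metis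
  from someI_ex[OF this]
  show "k_universal (n - 1) k (set (min_universal_list n k))" "length (min_universal_list n k) = U n k"
    unfolding min_universal_list_def by blast+
qed

definition clog2 :: "nat \<Rightarrow> nat" where
  "clog2 n = (LEAST T. n \<le> 2 ^ T)"

lemma le_two_power_clog2: "n \<le> 2 ^ clog2 n"
  unfolding clog2_def by (rule LeastI[of _ n]) (simp add: less_imp_le)

lemma clog2_le: "clog2 n \<le> n"
  unfolding clog2_def by (rule Least_le) (simp add: less_imp_le)

lemma clog2_le_log: assumes "1 \<le> n" shows "real (clog2 n) \<le> log 2 (real n) + 1"
proof (cases "clog2 n = 0")
  case False
  then have "\<not> n \<le> 2 ^ (clog2 n - 1)"
    unfolding clog2_def by (intro not_less_Least) simp
  then have "log 2 (real (2 ^ (clog2 n - 1))) < log 2 (real n)"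
    using assms by (subst log_less_cancel_iff) auto
  then show ?thesis using False by simp
qed (use assms in simp)

definition cpnet_learner :: "nat \<Rightarrow> nat \<Rightarrow> (bool list \<times> bool list) set \<Rightarrow> learner" where
  "cpnet_learner n k X =
     bind_tree (seq_trees (map (\<lambda>i. learn_cpt X n i (min_universal_list n k) (clog2 n)) [0..<n]))
       (\<lambda>hs. Leaf (\<lambda>x. fst x ! swapvar x = (hs ! swapvar x) (fst x)))"

lemma cpnet_learner_correct:
  assumes cpnet: "is_cpnet n k N" and X: "is_Xswap n X" and reliable: "votes_reliable orc X n N"
    and "k < n" and "runs orc (cpnet_learner n k X) h qs"
  shows "(\<forall>x\<in>X. h x = concept n N x) \<and> set qs \<subseteq> X \<and>
    length qs \<le> n * (U n k * (n - 1)) + net_edges n N * (clog2 n * (n - 1))"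
proof -
  define cpt where "cpt i = exec orc (learn_cpt X n i (min_universal_list n k) (clog2 n))" for i
  have cpt: "(\<forall>a. length a = n \<longrightarrow> fst (cpt i) a = pref N i a) \<and>
      length (snd (cpt i)) \<le> U n k * (n - 1) + card (Pa N i) * (clog2 n * (n - 1)) \<and>
      set (snd (cpt i)) \<subseteq> X" if "i < n" for i
    using learn_cpt_correct[OF cpnet X reliable min_universal_list(1) that le_two_power_clog2 \<open>k < n\<close>]
      min_universal_list(2) unfolding cpt_def by (metis prod.collapse)
  have exec: "exec orc (cpnet_learner n k X) =
      (\<lambda>x. fst x ! swapvar x = (map (fst \<circ> cpt) [0..<n] ! swapvar x) (fst x),
       concat (map (snd \<circ> cpt) [0..<n]))"
    unfolding cpnet_learner_def exec_bind_tree exec_seq_trees cpt_def by (simp add: comp_def)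
  have "h x = concept n N x" if "x \<in> X" for x
  proof -
    have "h x = (fst x ! swapvar x = fst (cpt (swapvar x)) (fst x))"
      using runs_imp_exec[OF assms(5)] exec Xswap_memD(1)[OF X that] by auto
    also have "\<dots> = (fst x ! swapvar x = pref N (swapvar x) (fst x))"
      using cpt Xswap_memD(1,2)[OF X that] by simp
    finally show ?thesis using concept_Xswap_iff[OF cpnet X that] by simp
  qed
  moreover have qs: "qs = concat (map (snd \<circ> cpt) [0..<n])"
    using runs_imp_exec[OF assms(5)] exec by simp
  then have "set qs \<subseteq> X" using cpt by fastforce
  moreover have "length qs \<le> n * (U n k * (n - 1)) + net_edges n N * (clog2 n * (n - 1))"
  proof -
    have "length qs = (\<Sum>i\<leftarrow>[0..<n]. length (snd (cpt i)))"
      unfolding qs by (simp add: length_concat comp_def)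
    also have "\<dots> \<le> (\<Sum>i\<leftarrow>[0..<n]. U n k * (n - 1) + card (Pa N i) * (clog2 n * (n - 1)))"
      by (rule sum_list_mono) (use cpt in auto)
    also have "\<dots> = n * (U n k * (n - 1)) + net_edges n N * (clog2 n * (n - 1))"
      unfolding net_edges_def
      by (simp add: interv_sum_list_conv_sum_set_nat atLeast0LessThan sum.distrib sum_distrib_right)
    finally show ?thesis .
  qed
  ultimately show ?thesis by blast
qed

section \<open>An upper bound on the size of universal sets\<close>

lemma bij_betw_lists_PiE:
  "bij_betw (\<lambda>v. restrict (nth v) {0..<m}) {v. length v = m \<and> (\<forall>i<m. v ! i \<in> B i)} (PiE {0..<m} B)"
proof (rule bij_betw_byWitness[where f' = "\<lambda>h. map h [0..<m]"])
  show "\<forall>v\<in>{v. length v = m \<and> (\<forall>i<m. v ! i \<in> B i)}. map (restrict (nth v) {0..<m}) [0..<m] = v"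
    by (auto intro: nth_equalityI)
  show "\<forall>h\<in>PiE {0..<m} B. restrict (nth (map h [0..<m])) {0..<m} = h"
    by (auto simp: PiE_iff extensional_def fun_eq_iff)
qed (auto simp: PiE_iff)

lemma card_lists_fixed_on:
  assumes I: "I \<subseteq> {0..<m}"
  shows "card {v :: bool list. length v = m \<and> (\<forall>i\<in>I. v ! i = f i)} = 2 ^ (m - card I)"
proof -
  let ?B = "\<lambda>i. if i \<in> I then {f i} else (UNIV :: bool set)"
  have eq: "{v :: bool list. length v = m \<and> (\<forall>i\<in>I. v ! i = f i)} =
      {v. length v = m \<and> (\<forall>i<m. v ! i \<in> ?B i)}"
    using I by auto
  have "card {v :: bool list. length v = m \<and> (\<forall>i\<in>I. v ! i = f i)} = card (PiE {0..<m} ?B)"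
    unfolding eq by (rule bij_betw_same_card[OF bij_betw_lists_PiE])
  also have "\<dots> = (\<Prod>i\<in>{0..<m}. card (?B i))" by (rule card_PiE) simp
  also have "\<dots> = (\<Prod>i\<in>{0..<m}. if i \<in> I then 1 else 2)"
    by (rule prod.cong) (auto simp: card_UNIV_bool)
  also have "\<dots> = 2 ^ card ({0..<m} - I)"
    by (simp add: prod.If_cases Diff_eq)
  also have "card ({0..<m} - I) = m - card I"
    using card_Diff_subset[OF finite_subset[OF I] I] by simp
  finally show ?thesis .
qed

lemma tuple_meeting_all:
  assumes "finite V" "finite Pat" "\<forall>p\<in>Pat. card (V - M p) \<le> b" "card Pat * b ^ t < card V ^ t"
  obtains \<tau> where "\<tau> \<in> PiE {0..<t} (\<lambda>_. V)" "\<forall>p\<in>Pat. \<exists>x<t. \<tau> x \<in> M p"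
proof -
  let ?Bad = "\<lambda>p. PiE {0..<t} (\<lambda>_. V - M p)"
  have "card (\<Union>p\<in>Pat. ?Bad p) \<le> (\<Sum>p\<in>Pat. card (?Bad p))"
    by (rule card_UN_le[OF assms(2)])
  also have "\<dots> \<le> (\<Sum>p\<in>Pat. b ^ t)"
    using assms(3) by (intro sum_mono) (simp add: card_PiE power_mono)
  also have "\<dots> < card (PiE {0..<t} (\<lambda>_. V))"
    using assms(4) by (simp add: card_PiE)
  finally have less: "card (\<Union>p\<in>Pat. ?Bad p) < card (PiE {0..<t} (\<lambda>_. V))" .
  have "finite (\<Union>p\<in>Pat. ?Bad p)"
    using assms(1,2) by (intro finite_UN_I finite_PiE) auto
  then have "\<not> PiE {0..<t} (\<lambda>_. V) \<subseteq> (\<Union>p\<in>Pat. ?Bad p)"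
    using less card_mono by (metis not_le)
  then obtain \<tau> where \<tau>: "\<tau> \<in> PiE {0..<t} (\<lambda>_. V)" "\<forall>p\<in>Pat. \<tau> \<notin> ?Bad p" by blast
  have "\<exists>x<t. \<tau> x \<in> M p" if "p \<in> Pat" for p
  proof -
    have "\<tau> \<notin> ?Bad p" using \<tau>(2) that by blast
    then obtain x where "x \<in> {0..<t}" "\<tau> x \<notin> V - M p" using \<tau>(1) by (auto simp: PiE_iff)
    then show ?thesis using \<tau>(1) by (auto simp: PiE_iff)
  qed
  then show ?thesis using that \<tau>(1) by blast
qed

lemma pred_power_self_le_half:
  assumes "1 \<le> a"
  shows "(a - 1) ^ a * 2 \<le> (a :: nat) ^ a"
proof -
  have a: "real a \<ge> 1" using assms by simp
  \<comment> \<open>\<open>(1 - 1/a)\<^sup>a \<le> e\<^sup>-\<^sup>1 \<le> 1/2\<close>\<close>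
  have "(1 - 1 / real a) ^ a \<le> exp (- (1 / real a)) ^ a"
    using exp_ge_add_one_self[of "- (1 / real a)"] a by (intro power_mono) (simp_all add: field_simps)
  also have "\<dots> = exp (-1)" using a by (simp add: exp_of_nat_mult[symmetric])
  finally have "(1 - 1 / real a) ^ a * 2 \<le> exp (-1) * 2" by simp
  also have "\<dots> \<le> 1"
    using exp_ge_add_one_self[of "1::real"] by (simp add: exp_minus field_simps)
  finally have "real a ^ a * ((1 - 1 / real a) ^ a * 2) \<le> real a ^ a"
    using a by (simp add: mult_left_le)
  moreover have "real (a - 1) = real a * (1 - 1 / real a)"
    using assms a by (simp add: field_simps of_nat_diff)
  ultimately have "real ((a - 1) ^ a * 2) \<le> real (a ^ a)"
    by (simp add: power_mult_distrib mult.assoc)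
  then show ?thesis by (simp only: of_nat_le_iff)
qed

lemma less_two_power_mult_pred_power:
  assumes "1 \<le> a" "c < 2 ^ M"
  shows "c * (a - 1) ^ (a * M) < (a :: nat) ^ (a * M)"
proof (cases "a = 1")
  case False
  then have pos: "0 < (a - 1) ^ (a * M)" using assms(1) by simp
  have "c * (a - 1) ^ (a * M) < 2 ^ M * (a - 1) ^ (a * M)"
    by (rule mult_strict_right_mono[OF assms(2) pos])
  also have "\<dots> = ((a - 1) ^ a * 2) ^ M"
    by (simp add: power_mult_distrib power_mult[symmetric] ac_simps)
  also have "\<dots> \<le> (a ^ a) ^ M" by (rule power_mono[OF pred_power_self_le_half[OF assms(1)]]) simp
  also have "\<dots> = a ^ (a * M)" by (simp add: power_mult)
  finally show ?thesis .
qed (use assms in \<open>cases M; simp\<close>)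

lemma card_patterns_le:
  "card (SIGMA I:{I. I \<subseteq> {0..<m} \<and> card I = k}. PiE I (\<lambda>_. UNIV :: bool set)) \<le> m ^ k * 2 ^ k"
proof -
  let ?Is = "{I. I \<subseteq> {0..<m} \<and> card I = k}"
  have fin: "finite ?Is" by (rule finite_subset[of _ "Pow {0..<m}"]) auto
  have "card (SIGMA I:?Is. PiE I (\<lambda>_. UNIV :: bool set)) = (\<Sum>I\<in>?Is. card (PiE I (\<lambda>_. UNIV :: bool set)))"
    using fin by (intro card_SigmaI) (auto intro!: finite_PiE dest: finite_subset)
  also have "\<dots> = (\<Sum>I\<in>?Is. 2 ^ k)"
    by (intro sum.cong refl) (auto simp: card_PiE card_UNIV_bool dest: finite_subset)
  also have "\<dots> = (m choose k) * 2 ^ k" using n_subsets[of "{0..<m}" k] by simp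
  also have "\<dots> \<le> m ^ k * 2 ^ k"
  proof (cases "k \<le> m")
    case True
    then show ?thesis using binomial_le_pow by simp
  qed (simp add: binomial_eq_0)
  finally show ?thesis .
qed

lemma card_lists_not_fixed_on:
  assumes I: "I \<subseteq> {0..<m}" "card I = k"
  shows "card ({v :: bool list. length v = m} - {v. length v = m \<and> (\<forall>i\<in>I. v ! i = f i)})
    = 2 ^ (m - k) * (2 ^ k - 1)"
proof -
  have "k \<le> m" using card_mono[OF _ I(1)] I(2) by simp
  let ?V = "{v :: bool list. length v = m}" and ?M = "{v. length v = m \<and> (\<forall>i\<in>I. v ! i = f i)}"
  have sub: "?M \<subseteq> ?V" by auto
  have "finite ?V" using finite_lists_length_eq[of "UNIV :: bool set" m] by simp
  then have "card (?V - ?M) = card ?V - card ?M" using card_Diff_subset[OF finite_subset[OF sub] sub] by simp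
  also have "\<dots> = 2 ^ m - 2 ^ (m - k)"
    using card_lists_fixed_on[OF I(1)] I(2) card_lists_length_eq[of "UNIV :: bool set" m]
    by (simp add: card_UNIV_bool)
  also have "\<dots> = 2 ^ (m - k) * (2 ^ k - 1)"
    using \<open>k \<le> m\<close> by (simp add: diff_mult_distrib2 power_add[symmetric])
  finally show ?thesis .
qed

lemma card_patterns_less:
  assumes "k \<le> m" "2 \<le> n" "m \<le> n" "n \<le> 2 ^ L"
  shows "card (SIGMA I:{I. I \<subseteq> {0..<m} \<and> card I = k}. PiE I (\<lambda>_. UNIV :: bool set))
    < 2 ^ (2 * (k + 1) * L)"
proof -
  have "card (SIGMA I:{I. I \<subseteq> {0..<m} \<and> card I = k}. PiE I (\<lambda>_. UNIV :: bool set)) \<le> m ^ k * 2 ^ k"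
    by (rule card_patterns_le)
  also have "\<dots> \<le> n ^ k * n ^ k" using assms(2,3) by (intro mult_mono power_mono) auto
  also have "\<dots> = n ^ (2 * k)" by (simp add: power_add[symmetric] mult_2)
  also have "\<dots> < n ^ (2 * (k + 1))" using assms(2) by (intro power_strict_increasing) auto
  also have "\<dots> \<le> (2 ^ L) ^ (2 * (k + 1))" by (rule power_mono[OF assms(4)]) simp
  also have "\<dots> = 2 ^ (2 * (k + 1) * L)" unfolding power_mult[symmetric] by (metis mult.commute)
  finally show ?thesis .
qed

text \<open>A random family of \<open>2\<^sup>k \<cdot> 2(k + 1)L\<close> vectors is \<open>k\<close>-universal with positive probability;
  here this is phrased as counting.\<close>

lemma k_universal_exists:
  assumes "k \<le> m" "2 \<le> n" "m \<le> n" "n \<le> 2 ^ L"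
  obtains S where "k_universal m k S" "card S \<le> 2 ^ k * (2 * (k + 1) * L)"
proof -
  define a :: nat where "a = 2 ^ k"
  define M where "M = 2 * (k + 1) * L"
  define V where "V = {v :: bool list. length v = m}"
  define Pat where "Pat = (SIGMA I:{I. I \<subseteq> {0..<m} \<and> card I = k}. PiE I (\<lambda>_. UNIV :: bool set))"
  define match where "match p = {v. length v = m \<and> (\<forall>i\<in>fst p. v ! i = snd p i)}"
    for p :: "nat set \<times> (nat \<Rightarrow> bool)"
  have finV: "finite V" and cardV: "card V = 2 ^ m"
    unfolding V_def using card_lists_length_eq[of "UNIV :: bool set" m]
      finite_lists_length_eq[of "UNIV :: bool set" m] by (simp_all add: card_UNIV_bool)
  have finPat: "finite Pat"
    unfolding Pat_def by (intro finite_SigmaI finite_PiE)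
      (auto intro: finite_subset[of _ "Pow {0..<m}"] dest: finite_subset)
  have bad: "card (V - match p) \<le> 2 ^ (m - k) * (a - 1)" if "p \<in> Pat" for p
    using that card_lists_not_fixed_on[of "fst p" m k "snd p"]
    unfolding Pat_def V_def match_def a_def by auto
  have "card Pat * (a - 1) ^ (a * M) < a ^ (a * M)"
    using card_patterns_less[OF assms] unfolding Pat_def M_def
    by (intro less_two_power_mult_pred_power) (simp_all add: a_def)
  then have "(2 ^ (m - k)) ^ (a * M) * (card Pat * (a - 1) ^ (a * M)) < (2 ^ (m - k)) ^ (a * M) * a ^ (a * M)"
    by simp
  moreover have "(2::nat) ^ m = 2 ^ (m - k) * a"
    unfolding a_def using assms(1) by (simp add: power_add[symmetric])
  ultimately have "card Pat * (2 ^ (m - k) * (a - 1)) ^ (a * M) < card V ^ (a * M)"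
    unfolding cardV by (simp add: power_mult_distrib ac_simps)
  then obtain \<tau> where \<tau>: "\<tau> \<in> PiE {0..<a * M} (\<lambda>_. V)" "\<forall>p\<in>Pat. \<exists>x<a * M. \<tau> x \<in> match p"
    using tuple_meeting_all[OF finV finPat] bad by blast
  have "k_universal m k (\<tau> ` {0..<a * M})"
    unfolding k_universal_def
  proof (intro conjI allI impI)
    show "\<tau> ` {0..<a * M} \<subseteq> {s. length s = m}" using \<tau>(1) unfolding V_def by auto
    fix I and f :: "nat \<Rightarrow> bool" assume "I \<subseteq> {0..<m} \<and> card I = k"
    then have "(I, restrict f I) \<in> Pat" unfolding Pat_def by auto
    then show "\<exists>s\<in>\<tau> ` {0..<a * M}. \<forall>i\<in>I. s ! i = f i"
      using \<tau>(2) unfolding match_def by fastforce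
  qed
  moreover have "card (\<tau> ` {0..<a * M}) \<le> 2 ^ k * (2 * (k + 1) * L)"
    using card_image_le[of "{0..<a * M}" \<tau>] unfolding a_def M_def by simp
  ultimately show ?thesis using that by blast
qed

lemma U_le:
  assumes "k \<le> n - 1" "2 \<le> n"
  shows "U n k \<le> 2 ^ k * (2 * (k + 1) * clog2 n)"
proof -
  obtain S where "k_universal (n - 1) k S" "card S \<le> 2 ^ k * (2 * (k + 1) * clog2 n)"
    using k_universal_exists[OF assms _ le_two_power_clog2] by auto
  then show ?thesis using U_le_card[of n k S] by simp
qed

lemma queries_le_poly:
  assumes "k \<le> n - 1" "2 \<le> n" "E \<le> n * k"
  shows "n * (U n k * (n - 1)) + E * (clog2 n * (n - 1)) \<le> (2 ^ k * (2 * (k + 1)) + k) * n ^ 3"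
proof -
  have "U n k \<le> 2 ^ k * (2 * (k + 1) * n)"
    by (rule le_trans[OF U_le[OF assms(1,2)]]) (intro mult_le_mono2 clog2_le)
  then have "n * (U n k * (n - 1)) \<le> n * (2 ^ k * (2 * (k + 1) * n) * n)"
    by (intro mult_le_mono2 mult_le_mono) auto
  moreover have "E * (clog2 n * (n - 1)) \<le> n * k * (n * n)"
    using assms(3) clog2_le[of n] by (intro mult_le_mono) auto
  ultimately have "n * (U n k * (n - 1)) + E * (clog2 n * (n - 1))
      \<le> n * (2 ^ k * (2 * (k + 1) * n) * n) + n * k * (n * n)"
    by (rule add_mono)
  also have "\<dots> = (2 ^ k * (2 * (k + 1)) + k) * n ^ 3"
    by (simp add: algebra_simps power3_eq_cube)
  finally show ?thesis .
qed

lemma clog2_le_twice_log: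
  assumes "2 \<le> n"
  shows "real (clog2 n) \<le> 2 * log 2 (real n)"
proof -
  have "1 \<le> log 2 (real n)" using assms by simp
  moreover have "real (clog2 n) \<le> log 2 (real n) + 1" using assms by (intro clog2_le_log) simp
  ultimately show ?thesis by linarith
qed

lemma U_le_real:
  assumes "k \<le> n - 1" "2 \<le> n"
  shows "real (U n k) \<le> 8 * 2 ^ k * log 2 (real n) * real (max k 2) powr log 2 (real (max k 2))"
proof -
  let ?m = "real (max k 2)"
  have "real (U n k) \<le> real (2 ^ k * (2 * (k + 1) * clog2 n))"
    by (simp only: of_nat_le_iff) (rule U_le[OF assms])
  also have "\<dots> = 2 ^ k * (2 * (real k + 1) * real (clog2 n))" by (simp add: algebra_simps)
  also have "\<dots> \<le> 2 ^ k * (2 * (2 * ?m) * (2 * log 2 (real n)))"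
    using clog2_le_twice_log[OF assms(2)] by (intro mult_left_mono mult_mono) auto
  also have "\<dots> = 8 * 2 ^ k * log 2 (real n) * ?m powr 1" by simp
  also have "\<dots> \<le> 8 * 2 ^ k * log 2 (real n) * ?m powr log 2 ?m"
    using assms(2) by (intro mult_left_mono powr_mono) auto
  finally show ?thesis .
qed

lemma queries_le_real:
  assumes "q \<le> n * (U n k * (n - 1)) + E * (clog2 n * (n - 1))" "2 \<le> n"
  shows "real q \<le> 2 * (real n ^ 2 * real (U n k) + real E * real n * log 2 (real n))"
proof -
  have "n * (U n k * (n - 1)) \<le> n * n * U n k" "E * (clog2 n * (n - 1)) \<le> E * (clog2 n * n)"
    by (simp_all add: algebra_simps)
  then have "q \<le> n * n * U n k + E * (clog2 n * n)" using assms(1) by linarith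
  then have "real q \<le> real (n * n * U n k + E * (clog2 n * n))"
    by (simp only: of_nat_le_iff)
  also have "\<dots> = real n ^ 2 * real (U n k) + real E * (real (clog2 n) * real n)"
    by (simp add: power2_eq_square)
  also have "\<dots> \<le> real n ^ 2 * real (U n k) + real E * (2 * log 2 (real n) * real n)"
    using clog2_le_twice_log[OF assms(2)] by (intro add_left_mono mult_left_mono mult_right_mono) auto
  also have "\<dots> \<le> 2 * (real n ^ 2 * real (U n k) + real E * real n * log 2 (real n))"
    using assms(2) by (simp add: algebra_simps)
  finally show ?thesis .
qed

lemma queries_le_real_bounds:
  assumes "k \<le> n - 1" "2 \<le> n" "q \<le> n * (U n k * (n - 1)) + E * (clog2 n * (n - 1))"
  shows "real q \<le> 16 * (real n ^ 2 * real (U n k) + real E * real n * log 2 (real n))"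
    "real q \<le> 16 * (real n ^ 2 * 2 ^ k * log 2 (real n)
        * real (max k 2) powr log 2 (real (max k 2)) + real E * real n * log 2 (real n))"
proof -
  have q: "real q \<le> 2 * (real n ^ 2 * real (U n k) + real E * real n * log 2 (real n))"
    using queries_le_real[OF assms(3,2)] .
  have nonneg: "0 \<le> real n ^ 2 * real (U n k)" "0 \<le> real E * real n * log 2 (real n)"
    using assms(2) by simp_all
  have "real n ^ 2 * real (U n k) \<le> real n ^ 2 *
      (8 * 2 ^ k * log 2 (real n) * real (max k 2) powr log 2 (real (max k 2)))"
    using U_le_real[OF assms(1,2)] by (intro mult_left_mono) auto
  also have "\<dots> = 8 * (real n ^ 2 * 2 ^ k * log 2 (real n) * real (max k 2) powr log 2 (real (max k 2)))"
    by (simp add: ac_simps)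
  finally have U: "real n ^ 2 * real (U n k) \<le>
      8 * (real n ^ 2 * 2 ^ k * log 2 (real n) * real (max k 2) powr log 2 (real (max k 2)))" .
  have "x \<le> 2 * (y + z) \<Longrightarrow> y \<le> 8 * w \<Longrightarrow> 0 \<le> y \<Longrightarrow> 0 \<le> z \<Longrightarrow>
      x \<le> 16 * (y + z) \<and> x \<le> 16 * (w + z)" for x y z w :: real
    by auto
  from this[OF q U nonneg]
  show "real q \<le> 16 * (real n ^ 2 * real (U n k) + real E * real n * log 2 (real n))"
    "real q \<le> 16 * (real n ^ 2 * 2 ^ k * log 2 (real n)
        * real (max k 2) powr log 2 (real (max k 2)) + real E * real n * log 2 (real n))"
    by simp_all
qed

lemma learns_with_bounds_cpnet_learner:
  assumes reliable: "\<And>n k X L N. 2 * k + 2 < n \<Longrightarrow> is_Xswap n X \<Longrightarrow> L \<subseteq> X \<Longrightarrow> is_cpnet n k N \<Longrightarrow>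
    \<forall>x\<in>X. card (F1 n X x \<inter> L) \<le> b n k \<Longrightarrow> votes_reliable (oracle n N L) X n N"
  shows "learns_with_bounds oracle b cpnet_learner"
proof -
  have run: "(\<forall>x\<in>X. h x = concept n N x) \<and> set qs \<subseteq> X \<and> k \<le> n - 1 \<and> 2 \<le> n \<and>
      length qs \<le> n * (U n k * (n - 1)) + net_edges n N * (clog2 n * (n - 1)) \<and>
      net_edges n N \<le> n * k"
    if "2 * k + 2 < n \<and> is_Xswap n X \<and> L \<subseteq> X \<and> is_cpnet n k N \<and>
      (\<forall>x\<in>X. card (F1 n X x \<inter> L) \<le> b n k) \<and> runs (oracle n N L) (cpnet_learner n k X) h qs"
    for n k X L N h qs
  proof -
    have H: "2 * k + 2 < n" "is_Xswap n X" "L \<subseteq> X" "is_cpnet n k N"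
      "\<forall>x\<in>X. card (F1 n X x \<inter> L) \<le> b n k" "runs (oracle n N L) (cpnet_learner n k X) h qs"
      using that by auto
    from cpnet_learner_correct[OF H(4,2) reliable[OF H(1-5)] _ H(6)] H(1) cpnet_net_edges_le[OF H(4)]
    show ?thesis by auto
  qed
  show ?thesis
    unfolding learns_with_bounds_def
  proof (rule conjI[OF _ conjI], goal_cases)
    case 1
    show ?case using run by blast
  next
    case 2
    show ?case
    proof (rule allI, goal_cases)
      case (1 k)
      show ?case
      proof (rule exI[of _ "2 ^ k * (2 * (k + 1)) + k"], rule exI[of _ 3], intro allI impI,
          goal_cases)
        case (1 n X L N h qs)
        note run = run[OF 1]
        have "length qs \<le> (2 ^ k * (2 * (k + 1)) + k) * n ^ 3"
          using run queries_le_poly[of k n "net_edges n N"] by linarith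
        also have "\<dots> \<le> (2 ^ k * (2 * (k + 1)) + k) * (n + net_size n N + card L) ^ 3"
          by (intro mult_le_mono2 power_mono) auto
        finally show ?case .
      qed
    qed
  next
    case 3
    show ?case
    proof (rule exI[of _ 16], rule exI[of _ 1], intro allI impI, goal_cases)
      case (1 n k X L N h qs)
      note run = run[OF 1]
      show ?case using queries_le_real_bounds[of k n "length qs" "net_edges n N"] run by simp
    qed
  qed
qed

theorem corollary3:
  shows "(\<exists>A. learns_with_bounds limited_oracle (\<lambda>n k. n - 2 - 2 * k) A) \<and>
         (\<exists>A. learns_with_bounds malicious_oracle (\<lambda>n k. (n - 1) div 2 - k - 1) A)"
proof (intro conjI exI)
  show "learns_with_bounds limited_oracle (\<lambda>n k. n - 2 - 2 * k) cpnet_learner"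
    by (rule learns_with_bounds_cpnet_learner) (rule votes_reliable_limited; simp)
  show "learns_with_bounds malicious_oracle (\<lambda>n k. (n - 1) div 2 - k - 1) cpnet_learner"
    by (rule learns_with_bounds_cpnet_learner) (rule votes_reliable_malicious; simp)
qed

end
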